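(* Let $a_{4,0},a_{2,2},a_{0,4}\geqslant 0$ and $a_{2,0},a_{0,2}\in\mathbb{R}$ with $a_{4,0}+a_{2,2}>0$ and $a_{2,2}+a_{0,4}>0$, and let $W(x,y)=e^{-q(x,y)}$, where $q(x,y)=a_{4,0}x^4+a_{2,2}x^2y^2+a_{0,4}y^4+a_{2,0}x^2+a_{0,2}y^2$. Let $\{\mathbb{P}_n\}_{n\geqslant0}$ be an orthonormal polynomial system for $W$, with leading coefficient matrices $G_n$ and three term relation matrices $A_{n,1},A_{n,2}$ (see context). Then for every $n\geqslant 0$, \begin{align*} 4a_{4,0}A_{n,1}&\left[(A_{n+1,1}A_{n+1,1}^T)A_{n,1}^T+A_{n,1}^T(A_{n,1}A_{n,1}^T+A_{n-1,1}^TA_{n-1,1})\right]\\ &+2a_{2,2}A_{n,1}\left[(A_{n+1,2}A_{n+1,1}^T)A_{n,2}^T+A_{n,2}^T(A_{n,1}A_{n,2}^T+A_{n-1,1}^TA_{n-1,2})\right]\\ &+2a_{2,0}A_{n,1}A_{n,1}^T=G_nN_{n+1,1}G_n^{-1} \end{align*} and \begin{align*} 4a_{0,4}A_{n,2}&\left[(A_{n+1,2}A_{n+1,2}^T)A_{n,2}^T+A_{n,2}^T(A_{n,2}A_{n,2}^T+A_{n-1,2}^TA_{n-1,2})\right]\\ &+2a_{2,2}A_{n,2}\left[(A_{n+1,1}A_{n+1,2}^T)A_{n,1}^T+A_{n,1}^T(A_{n,2}A_{n,1}^T+A_{n-1,2}^TA_{n-1,1})\right]\\ &+2a_{0,2}A_{n,2}A_{n,2}^T=G_nN_{n+1,2}G_n^{-1}.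 \end{align*}
   Context: Inner product: $(f,g)=\iint_{\mathbb{R}^2} f(x,y)g(x,y)W(x,y)\,dx\,dy$; for vectors/matrices of polynomials it is applied entrywise. For $n\geqslant0$, $\mathbb{X}_n=(x^n,x^{n-1}y,\dots,xy^{n-1},y^n)^T$. An orthonormal polynomial system is a sequence $\{\mathbb{P}_n\}_{n\geqslant0}$ of column vectors $\mathbb{P}_n=(P_{n,0},\dots,P_{n,n})^T$ of real bivariate polynomials, each of total degree exactly $n$, linearly independent, with $(\mathbb{P}_n,\mathbb{P}_n^T)=I_{n+1}$ and $(\mathbb{P}_n,\mathbb{P}_m^T)=0$ for $m\neq n$. Write $\mathbb{P}_n=\sum_{k=0}^nG^n_k\mathbb{X}_k$ with constant $(n+1)\times(k+1)$ matrices $G^n_k$; $G_n:=G^n_n$ is invertible. The orthonormal system satisfies, for $n\geqslant0$ (with $\mathbb{P}_{-1}=0$ and $A_{-1,i}=0$), $x\mathbb{P}_n=A_{n,1}\mathbb{P}_{n+1}+A_{n-1,1}^T\mathbb{P}_{n-1}$ and $y\mathbb{P}_n=A_{n,2}\mathbb{P}_{n+1}+A_{n-1,2}^T\mathbb{P}_{n-1}$, where $A_{n,i}$ are $(n+1)\times(n+2)$ full rank matrices. $N_{n,1}=\mathrm{diag}(n,n-1,\dots,1)$ and $N_{n,2}=\mathrm{diag}(1,2,\dots,n)$ are $n\times n$ matrices (so $N_{n+1,i}$ is $(n+1)\times(n+1)$). *)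

theory Defs
  imports "HOL-Analysis.Analysis" "Jordan_Normal_Form.Gauss_Jordan_Elimination"
begin

definition qform :: "real \<Rightarrow> real \<Rightarrow> real \<Rightarrow> real \<Rightarrow> real \<Rightarrow> real \<Rightarrow> real \<Rightarrow> real" where
  "qform a40 a22 a04 a20 a02 x y =
     a40 * x^4 + a22 * x^2 * y^2 + a04 * y^4 + a20 * x^2 + a02 * y^2"

definition weight :: "real \<Rightarrow> real \<Rightarrow> real \<Rightarrow> real \<Rightarrow> real \<Rightarrow> real \<Rightarrow> real \<Rightarrow> real" where
  "weight a40 a22 a04 a20 a02 x y = exp (- qform a40 a22 a04 a20 a02 x y)"

definition ip :: "(real \<Rightarrow> real \<Rightarrow> real) \<Rightarrow> (real \<Rightarrow> real \<Rightarrow> real) \<Rightarrow> (real \<Rightarrow> real \<Rightarrow> real) \<Rightarrow> real" where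
  "ip W f g = integral\<^sup>L lborel (\<lambda>(x::real, y::real). f x y * g x y * W x y)"

text \<open>The polynomial system given by its coefficient matrices: P_n = sum_{k<=n} G n k X_k,
  where G n k is the (n+1) x (k+1) matrix and X_k = (x^k, x^(k-1) y, ..., y^k)^T.
  opoly G n i x y is the i-th component P_{n,i}(x,y).\<close>
definition opoly :: "(nat \<Rightarrow> nat \<Rightarrow> real mat) \<Rightarrow> nat \<Rightarrow> nat \<Rightarrow> real \<Rightarrow> real \<Rightarrow> real" where
  "opoly G n i x y = (\<Sum>k\<le>n. \<Sum>j\<le>k. G n k $$ (i, j) * x ^ (k - j) * y ^ j)"

definition orthonormal_system :: "(real \<Rightarrow> real \<Rightarrow> real) \<Rightarrow> (nat \<Rightarrow> nat \<Rightarrow> real mat) \<Rightarrow> bool" where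
  "orthonormal_system W G \<longleftrightarrow>
     (\<forall>n k. k \<le> n \<longrightarrow> G n k \<in> carrier_mat (n+1) (k+1)) \<and>
     (\<forall>n i. i \<le> n \<longrightarrow> (\<exists>j\<le>n. G n n $$ (i, j) \<noteq> 0)) \<and>
     (\<forall>n m i j. i \<le> n \<longrightarrow> j \<le> m \<longrightarrow>
        ip W (opoly G n i) (opoly G m j) = (if n = m \<and> i = j then 1 else 0))"

text \<open>A_{n-1} with the convention A_{-1} = 0 (a 0 x 1 zero matrix).\<close>
definition prevA :: "(nat \<Rightarrow> real mat) \<Rightarrow> nat \<Rightarrow> real mat" where
  "prevA A n = (if n = 0 then 0\<^sub>m 0 1 else A (n - 1))"

definition three_term :: "(nat \<Rightarrow> nat \<Rightarrow> real mat) \<Rightarrow> (real \<Rightarrow> real \<Rightarrow> real) \<Rightarrow> (nat \<Rightarrow> real mat) \<Rightarrow> bool" where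
  "three_term G z A \<longleftrightarrow>
     (\<forall>n. A n \<in> carrier_mat (n+1) (n+2)) \<and>
     (\<forall>n i x y. i \<le> n \<longrightarrow>
        z x y * opoly G n i x y =
          (\<Sum>j\<le>n+1. A n $$ (i, j) * opoly G (n+1) j x y) +
          (\<Sum>j<n. prevA A n $$ (j, i) * opoly G (n-1) j x y))"

definition N1 :: "nat \<Rightarrow> real mat" where
  "N1 n = mat n n (\<lambda>(i, j). if i = j then real (n - i) else 0)"

definition N2 :: "nat \<Rightarrow> real mat" where
  "N2 n = mat n n (\<lambda>(i, j). if i = j then real (i + 1) else 0)"

definition minv :: "real mat \<Rightarrow> real mat" where
  "minv M = the (mat_inverse M)"

end

(*
  Write q_x = 4 a40 x^3 + 2 a22 x y^2 + 2 a20 x for the x-derivative of q, so that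
  d/dx W = - q_x W. Integrating d/dx (P_{n+1} P_n^T W) over the plane (the boundary terms
  vanish since every product of polynomials is W-integrable, which already follows from
  orthonormality) gives

    (P_{n+1}, q_x P_n^T) = (d/dx P_{n+1}, P_n^T) + (P_{n+1}, d/dx P_n^T),

  and the last term is 0 by orthogonality. Multiply by A_{n,1} from the left.
  Expanding q_x P_n by repeated use of the three term relations turns the left hand side
  into the matrix polynomial in the A's. On the right, differentiating
  x P_n = A_{n,1} P_{n+1} + A_{n-1,1}^T P_{n-1} shows that A_{n,1} d/dx P_{n+1} equals
  P_n + x d/dx P_n up to terms of degree < n; on the top degree part G_n X_n this operator
  acts as G_n N_{n+1,1} X_n, and (X_n, P_n^T) = G_n^{-1}.

  The second identity is the first one for the reflected system P_n(y, x), which is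
  orthonormal for W(y, x) = exp(-q(y, x)), has leading coefficients G_n J with J the
  reversal matrix, and J N_{n+1,1} J = N_{n+1,2}.
*)

theory Submission
  imports Defs "Jordan_Normal_Form.Determinant"
begin

section \<open>Integration by parts in the plane\<close>

lemma integrable_tendsto_at_top_eq_0:
  fixes u :: "real \<Rightarrow> real"
  assumes u: "integrable lborel u" and lim: "(u \<longlongrightarrow> L) at_top"
  shows "L = 0"
proof (rule ccontr)
  assume L: "L \<noteq> 0"
  have "\<forall>\<^sub>F x in at_top. dist (u x) L < \<bar>L\<bar>/2"
    using tendstoD[OF lim, of "\<bar>L\<bar>/2"] L by auto
  then obtain R where R: "\<And>x. x \<ge> R \<Longrightarrow> dist (u x) L < \<bar>L\<bar>/2"
    by (auto simp: eventually_at_top_linorder)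
  define I where "I = integral\<^sup>L lborel (\<lambda>x. \<bar>u x\<bar>)"
  define b where "b = R + 2 * (\<bar>I\<bar> + 1) / \<bar>L\<bar>"
  have "R \<le> b" using L by (simp add: b_def)
  have "integral\<^sup>L lborel (\<lambda>x. indicator {R..b} x * (\<bar>L\<bar>/2)) \<le> I"
    unfolding I_def
  proof (rule integral_mono)
    show "integrable lborel (\<lambda>x. indicator {R..b} x * (\<bar>L\<bar>/2) :: real)"
      by (intro integrable_mult_left integrable_real_indicator) (auto simp: emeasure_lborel_Icc_eq)
    show "integrable lborel (\<lambda>x. \<bar>u x\<bar>)" using u by auto
    show "indicator {R..b} x * (\<bar>L\<bar>/2) \<le> \<bar>u x\<bar>" for x
      using R[of x] abs_triangle_ineq2[of L "u x"]
      by (auto simp: indicator_def dist_real_def abs_minus_commute)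
  qed
  moreover have "integral\<^sup>L lborel (\<lambda>x. indicator {R..b} x * (\<bar>L\<bar>/2)) = \<bar>I\<bar> + 1"
    using \<open>R \<le> b\<close> L by (simp add: b_def)
  ultimately show False by linarith
qed

lemma set_integral_derivative_atLeast_0:
  fixes u u' :: "real \<Rightarrow> real"
  assumes deriv: "\<And>x. (u has_real_derivative u' x) (at x)"
    and cont: "continuous_on UNIV u'"
    and u: "integrable lborel u" and u': "integrable lborel u'"
  shows "(LINT x:{0..}|lborel. u' x) = - u 0"
proof -
  \<comment> \<open>\<open>u b = u 0 + \<integral>\<^sub>0\<^sup>b u'\<close> converges as \<open>b \<rightarrow> \<infinity>\<close>, and an integrable \<open>u\<close>
    can only converge to 0.\<close>
  have FTC: "(LINT x:{0..b}|lborel. u' x) = u b - u 0" if "0 \<le> b" for b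
    unfolding set_lebesgue_integral_def
  proof (rule integral_FTC_atLeastAtMost[OF that])
    show "(u has_vector_derivative u' x) (at x within {0..b})" for x
      using deriv[of x] by (auto simp: has_real_derivative_iff_has_vector_derivative
          intro: has_vector_derivative_at_within)
    show "continuous_on {0..b} u'" using cont by (rule continuous_on_subset) auto
  qed
  have "set_integrable lborel {0..} u'"
    unfolding set_integrable_def using u' by (intro integrable_mult_indicator) auto
  then have "((\<lambda>b. LINT x:{0..b}|lborel. u' x) \<longlongrightarrow> (LINT x:{0..}|lborel. u' x)) at_top"
    by (intro tendsto_set_lebesgue_integral_at_top) auto
  moreover have "\<forall>\<^sub>F b in at_top. (LINT x:{0..b}|lborel. u' x) = u b - u 0"
    using eventually_ge_at_top[of "0::real"] by eventually_elim (rule FTC)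
  ultimately have "((\<lambda>b. u b - u 0) \<longlongrightarrow> (LINT x:{0..}|lborel. u' x)) at_top"
    by (rule Lim_transform_eventually)
  from tendsto_add[OF this tendsto_const[of "u 0"]]
  have "(u \<longlongrightarrow> (LINT x:{0..}|lborel. u' x) + u 0) at_top" by simp
  from integrable_tendsto_at_top_eq_0[OF u this] show ?thesis by simp
qed

lemma integral_derivative_eq_0:
  fixes u u' :: "real \<Rightarrow> real"
  assumes deriv: "\<And>x. (u has_real_derivative u' x) (at x)"
    and cont: "continuous_on UNIV u'"
    and u: "integrable lborel u" and u': "integrable lborel u'"
  shows "integral\<^sup>L lborel u' = 0"
proof -
  have right: "(LINT x:{0..}|lborel. u' x) = - u 0"
    by (rule set_integral_derivative_atLeast_0[OF deriv cont u u'])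
  \<comment> \<open>The left half is the right half of the reflected function \<open>x \<mapsto> u (- x)\<close>.\<close>
  have "(LINT x:{0..}|lborel. - u' (- x)) = - u (- 0)"
  proof (rule set_integral_derivative_atLeast_0)
    show "((\<lambda>x. u (- x)) has_real_derivative - u' (- x)) (at x)" for x
      using DERIV_chain2[OF deriv DERIV_minus[OF DERIV_ident]] by simp
    show "continuous_on UNIV (\<lambda>x. - u' (- x))"
      by (intro continuous_intros continuous_on_compose2[OF cont]) auto
    show "integrable lborel (\<lambda>x. u (- x))"
      using lborel_integrable_real_affine_iff[of "-1" u 0] u by simp
    show "integrable lborel (\<lambda>x. - u' (- x))"
      using lborel_integrable_real_affine_iff[of "-1" u' 0] u' by simp
  qed
  moreover have "(LINT x:{0..}|lborel. - u' (- x)) = - (LINT x:{..0}|lborel. u' x)"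
    using lborel_integral_real_affine[of "-1" "\<lambda>x. indicator {..0} x * u' x" 0]
    by (simp add: set_lebesgue_integral_def indicator_def if_distrib)
  ultimately have left: "(LINT x:{..0}|lborel. u' x) = u 0" by simp
  have si: "set_integrable lborel A u'" if "A \<in> sets lborel" for A
    unfolding set_integrable_def using that u' by (rule integrable_mult_indicator)
  have "integral\<^sup>L lborel u' = integral\<^sup>L lborel (\<lambda>x. indicator {0..} x * u' x + indicator {..0} x * u' x)"
  proof (rule integral_cong_AE)
    show "AE x in lborel. u' x = indicator {0..} x * u' x + indicator {..0} x * u' x"
      using AE_lborel_singleton[of 0] by eventually_elim (auto simp: indicator_def)
  qed (use u' si[of "{0..}"] si[of "{..0}"] in \<open>auto simp: set_integrable_def\<close>)
  also have "\<dots> = (LINT x:{0..}|lborel. u' x) + (LINT x:{..0}|lborel. u' x)"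
    using si[of "{0..}"] si[of "{..0}"]
    unfolding set_integrable_def set_lebesgue_integral_def by simp
  finally show ?thesis using left right by simp
qed

lemma integral_partial_x_eq_0:
  fixes h dh :: "real \<Rightarrow> real \<Rightarrow> real"
  assumes deriv: "\<And>x y. ((\<lambda>x. h x y) has_real_derivative dh x y) (at x)"
    and cont: "\<And>y. continuous_on UNIV (\<lambda>x. dh x y)"
    and h: "integrable lborel (\<lambda>(x, y). h x y)" and dh: "integrable lborel (\<lambda>(x, y). dh x y)"
  shows "integral\<^sup>L lborel (\<lambda>(x::real, y::real). dh x y) = 0"
proof -
  have h': "integrable (lborel \<Otimes>\<^sub>M lborel) (\<lambda>(x, y). h x y)"
    and dh': "integrable (lborel \<Otimes>\<^sub>M lborel) (\<lambda>(x, y). dh x y)"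
    using h dh by (simp_all add: lborel_prod)
  have "AE y in lborel. integral\<^sup>L lborel (\<lambda>x. dh x y) = 0"
    using lborel_pair.AE_integrable_snd[OF h'] lborel_pair.AE_integrable_snd[OF dh']
    by eventually_elim (rule integral_derivative_eq_0[OF deriv cont])
  then have "(\<integral>y. (\<integral>x. dh x y \<partial>lborel) \<partial>lborel) = 0"
    by (rule integral_eq_zero_AE)
  then show ?thesis
    using lborel_pair.integral_snd[OF dh'] by (simp add: lborel_prod)
qed


definition ip_integrable ::
    "(real \<Rightarrow> real \<Rightarrow> real) \<Rightarrow> (real \<Rightarrow> real \<Rightarrow> real) \<Rightarrow> (real \<Rightarrow> real \<Rightarrow> real) \<Rightarrow> bool" where
  "ip_integrable W f g \<longleftrightarrow> integrable lborel (\<lambda>(x::real, y::real). f x y * g x y * W x y)"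

lemma ip_commute: "ip W f g = ip W g f"
  unfolding ip_def by (simp add: mult.commute)

lemma ip_integrable_commute: "ip_integrable W f g \<longleftrightarrow> ip_integrable W g f"
  unfolding ip_integrable_def by (simp add: mult.commute)

lemma ip_cmult_left: "ip W (\<lambda>x y. c * f x y) g = c * ip W f g"
  unfolding ip_def by (simp add: case_prod_beta' mult.assoc)

lemma ip_add_left:
  assumes "ip_integrable W f h" "ip_integrable W g h"
  shows "ip W (\<lambda>x y. f x y + g x y) h = ip W f h + ip W g h"
  using Bochner_Integration.integral_add[OF assms[unfolded ip_integrable_def]]
  unfolding ip_def by (simp add: case_prod_beta' distrib_right)

lemma ip_sum_left:
  assumes "finite S" "\<And>s. s \<in> S \<Longrightarrow> ip_integrable W (F s) g"
  shows "ip W (\<lambda>x y. \<Sum>s\<in>S. c s * F s x y) g = (\<Sum>s\<in>S. c s * ip W (F s) g)"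
proof -
  have "(\<lambda>(x, y). (\<Sum>s\<in>S. c s * F s x y) * g x y * W x y) =
      (\<lambda>z. \<Sum>s\<in>S. c s * (\<lambda>(x, y). F s x y * g x y * W x y) z)"
    by (auto simp: fun_eq_iff sum_distrib_right mult.assoc)
  then show ?thesis
    using assms unfolding ip_def ip_integrable_def by simp
qed

lemma ip_integrable_sum_left:
  assumes "finite S" "\<And>s. s \<in> S \<Longrightarrow> ip_integrable W (F s) g"
  shows "ip_integrable W (\<lambda>x y. \<Sum>s\<in>S. c s * F s x y) g"
proof -
  have "(\<lambda>(x, y). (\<Sum>s\<in>S. c s * F s x y) * g x y * W x y) =
      (\<lambda>z. \<Sum>s\<in>S. c s * (\<lambda>(x, y). F s x y * g x y * W x y) z)"
    by (auto simp: fun_eq_iff sum_distrib_right mult.assoc)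
  then show ?thesis
    using assms unfolding ip_integrable_def by simp
qed

text \<open>\<open>ip_mat W r c F H\<close> is the matrix \<open>(F, H\<^sup>T)\<close> of the paper, for the first \<open>r\<close>
  components of \<open>F\<close> and the first \<open>c\<close> of \<open>H\<close>.\<close>
definition ip_mat :: "(real \<Rightarrow> real \<Rightarrow> real) \<Rightarrow> nat \<Rightarrow> nat \<Rightarrow>
    (nat \<Rightarrow> real \<Rightarrow> real \<Rightarrow> real) \<Rightarrow> (nat \<Rightarrow> real \<Rightarrow> real \<Rightarrow> real) \<Rightarrow> real mat" where
  "ip_mat W r c F H = mat r c (\<lambda>(i, j). ip W (F i) (H j))"

lemma ip_mat_carrier [simp]: "ip_mat W r c F H \<in> carrier_mat r c"
  and dim_row_ip_mat [simp]: "dim_row (ip_mat W r c F H) = r"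
  and dim_col_ip_mat [simp]: "dim_col (ip_mat W r c F H) = c"
  by (simp_all add: ip_mat_def)

lemma index_ip_mat [simp]: "i < r \<Longrightarrow> j < c \<Longrightarrow> ip_mat W r c F H $$ (i, j) = ip W (F i) (H j)"
  by (simp add: ip_mat_def)

lemma ip_mat_cong:
  "(\<And>i. i < r \<Longrightarrow> F i = F' i) \<Longrightarrow> (\<And>j. j < c \<Longrightarrow> H j = H' j) \<Longrightarrow>
    ip_mat W r c F H = ip_mat W r c F' H'"
  by (rule eq_matI) auto

lemma mult_ip_mat:
  assumes A: "A \<in> carrier_mat r s"
    and int: "\<And>k j. k < s \<Longrightarrow> j < c \<Longrightarrow> ip_integrable W (F k) (H j)"
  shows "A * ip_mat W s c F H = ip_mat W r c (\<lambda>i x y. \<Sum>k<s. A $$ (i, k) * F k x y) H"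
proof (rule eq_matI)
  fix i j assume "i < dim_row (ip_mat W r c (\<lambda>i x y. \<Sum>k<s. A $$ (i, k) * F k x y) H)"
    "j < dim_col (ip_mat W r c (\<lambda>i x y. \<Sum>k<s. A $$ (i, k) * F k x y) H)"
  then have "i < r" "j < c" by simp_all
  moreover have "ip W (\<lambda>x y. \<Sum>k<s. A $$ (i, k) * F k x y) (H j) = (\<Sum>k<s. A $$ (i, k) * ip W (F k) (H j))"
    using int \<open>j < c\<close> by (intro ip_sum_left) auto
  ultimately show "(A * ip_mat W s c F H) $$ (i, j) =
      ip_mat W r c (\<lambda>i x y. \<Sum>k<s. A $$ (i, k) * F k x y) H $$ (i, j)"
    using A by (simp add: scalar_prod_def atLeast0LessThan)
qed (use A in auto)

lemma ip_mat_add_left: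
  assumes "\<And>i j. i < r \<Longrightarrow> j < c \<Longrightarrow> ip_integrable W (F i) (H j)"
    and "\<And>i j. i < r \<Longrightarrow> j < c \<Longrightarrow> ip_integrable W (F' i) (H j)"
  shows "ip_mat W r c (\<lambda>i x y. F i x y + F' i x y) H = ip_mat W r c F H + ip_mat W r c F' H"
  by (rule eq_matI) (use assms in \<open>auto simp: ip_add_left\<close>)

lemma ip_mat_add_right:
  assumes "\<And>i j. i < r \<Longrightarrow> j < c \<Longrightarrow> ip_integrable W (F i) (H j)"
    and "\<And>i j. i < r \<Longrightarrow> j < c \<Longrightarrow> ip_integrable W (F i) (H' j)"
  shows "ip_mat W r c F (\<lambda>j x y. H j x y + H' j x y) = ip_mat W r c F H + ip_mat W r c F H'"
  by (rule eq_matI) (use assms in \<open>auto simp: ip_commute[of W "F _"] ip_integrable_commute ip_add_left\<close>)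

lemma ip_mat_cmult_right: "ip_mat W r c F (\<lambda>j x y. a * H j x y) = a \<cdot>\<^sub>m ip_mat W r c F H"
  by (rule eq_matI) (auto simp: ip_commute[of W "F _"] ip_cmult_left)

section \<open>Spans of the orthonormal polynomials\<close>

definition lower_span :: "(nat \<Rightarrow> nat \<Rightarrow> real mat) \<Rightarrow> nat \<Rightarrow> (real \<Rightarrow> real \<Rightarrow> real) set" where
  "lower_span G n =
    {f. \<exists>c. f = (\<lambda>x y. \<Sum>p\<in>(SIGMA k:{..<n}. {..k}). c p * opoly G (fst p) (snd p) x y)}"

lemma lower_span_0: "(\<lambda>x y. 0) \<in> lower_span G n"
  unfolding lower_span_def by (auto intro!: exI[of _ "\<lambda>p. 0"])

lemma lower_span_add:
  assumes "f \<in> lower_span G n" "g \<in> lower_span G n"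
  shows "(\<lambda>x y. f x y + g x y) \<in> lower_span G n"
proof -
  from assms obtain c d
    where "f = (\<lambda>x y. \<Sum>p\<in>(SIGMA k:{..<n}. {..k}). c p * opoly G (fst p) (snd p) x y)"
      and "g = (\<lambda>x y. \<Sum>p\<in>(SIGMA k:{..<n}. {..k}). d p * opoly G (fst p) (snd p) x y)"
    unfolding lower_span_def by blast
  then show ?thesis
    unfolding lower_span_def
    by (auto intro!: exI[of _ "\<lambda>p. c p + d p"] simp: distrib_right sum.distrib)
qed

lemma lower_span_cmult:
  assumes "f \<in> lower_span G n"
  shows "(\<lambda>x y. a * f x y) \<in> lower_span G n"
proof -
  from assms obtain c
    where "f = (\<lambda>x y. \<Sum>p\<in>(SIGMA k:{..<n}. {..k}). c p * opoly G (fst p) (snd p) x y)"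
    unfolding lower_span_def by blast
  then show ?thesis
    unfolding lower_span_def
    by (auto intro!: exI[of _ "\<lambda>p. a * c p"] simp: sum_distrib_left mult.assoc)
qed

lemma lower_span_diff:
  "f \<in> lower_span G n \<Longrightarrow> g \<in> lower_span G n \<Longrightarrow> (\<lambda>x y. f x y - g x y) \<in> lower_span G n"
  using lower_span_add[OF _ lower_span_cmult[of g G n "-1"], of f] by simp

lemma lower_span_sum:
  "finite S \<Longrightarrow> (\<And>s. s \<in> S \<Longrightarrow> F s \<in> lower_span G n) \<Longrightarrow>
    (\<lambda>x y. \<Sum>s\<in>S. F s x y) \<in> lower_span G n"
  by (induction S rule: finite_induct) (auto intro: lower_span_0 lower_span_add)

lemma lower_span_mono:
  assumes "m \<le> n"
  shows "lower_span G m \<subseteq> lower_span G n"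
proof
  fix f assume "f \<in> lower_span G m"
  then obtain c
    where f: "f = (\<lambda>x y. \<Sum>p\<in>(SIGMA k:{..<m}. {..k}). c p * opoly G (fst p) (snd p) x y)"
    unfolding lower_span_def by blast
  have sub: "(SIGMA k:{..<m}. {..k}) \<subseteq> (SIGMA k:{..<n}. {..k})" using assms by auto
  have "f x y = (\<Sum>p\<in>(SIGMA k:{..<n}. {..k}).
      (if p \<in> (SIGMA k:{..<m}. {..k}) then c p else 0) * opoly G (fst p) (snd p) x y)" for x y
    unfolding f by (rule sum.mono_neutral_cong_left) (use sub in auto)
  then show "f \<in> lower_span G n"
    unfolding lower_span_def
    by (auto intro!: exI[of _ "\<lambda>p. if p \<in> (SIGMA k:{..<m}. {..k}) then c p else 0"] ext)
qed

lemma opoly_in_lower_span: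
  assumes "j \<le> k" "k < n"
  shows "opoly G k j \<in> lower_span G n"
proof -
  have kj: "(k, j) \<in> (SIGMA k:{..<n}. {..k})" using assms by auto
  have "opoly G k j x y = (\<Sum>p\<in>(SIGMA k:{..<n}. {..k}).
      (if p = (k, j) then 1 else 0) * opoly G (fst p) (snd p) x y)" for x y
  proof -
    have "(\<Sum>p\<in>(SIGMA k:{..<n}. {..k}). (if p = (k, j) then 1 else 0) * opoly G (fst p) (snd p) x y)
        = (\<Sum>p\<in>(SIGMA k:{..<n}. {..k}). if p = (k, j) then opoly G k j x y else 0)"
      by (rule sum.cong) auto
    then show ?thesis using kj by simp
  qed
  then show ?thesis
    unfolding lower_span_def by (auto intro!: exI[of _ "\<lambda>p. if p = (k, j) then 1 else 0"] ext)
qed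

lemma three_term_carrier: "three_term G z A \<Longrightarrow> A n \<in> carrier_mat (n + 1) (n + 2)"
  unfolding three_term_def by blast

lemma three_term_prevA_carrier: "three_term G z A \<Longrightarrow> prevA A n \<in> carrier_mat n (n + 1)"
  unfolding prevA_def by (cases n) (auto dest: three_term_carrier)

lemma three_term_eq:
  "three_term G z A \<Longrightarrow> i \<le> n \<Longrightarrow>
    z x y * opoly G n i x y =
      (\<Sum>j\<le>n+1. A n $$ (i, j) * opoly G (n+1) j x y) +
      (\<Sum>j<n. prevA A n $$ (j, i) * opoly G (n-1) j x y)"
  unfolding three_term_def by blast

lemma lower_span_mult_three_term:
  assumes T: "three_term G z A" and f: "f \<in> lower_span G n"
  shows "(\<lambda>x y. z x y * f x y) \<in> lower_span G (Suc n)"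
proof -
  from f obtain c
    where f: "f = (\<lambda>x y. \<Sum>p\<in>(SIGMA k:{..<n}. {..k}). c p * opoly G (fst p) (snd p) x y)"
    unfolding lower_span_def by blast
  have "(\<lambda>x y. z x y * opoly G k j x y) \<in> lower_span G (Suc n)" if "k < n" "j \<le> k" for k j
  proof -
    have "(\<lambda>x y. (\<Sum>l\<le>k+1. A k $$ (j, l) * opoly G (k+1) l x y) +
        (\<Sum>l<k. prevA A k $$ (l, j) * opoly G (k-1) l x y)) \<in> lower_span G (Suc n)"
      using that
      by (intro lower_span_add lower_span_sum lower_span_cmult opoly_in_lower_span) auto
    moreover have "(\<lambda>x y. z x y * opoly G k j x y) = (\<lambda>x y. (\<Sum>l\<le>k+1. A k $$ (j, l) * opoly G (k+1) l x y) +
        (\<Sum>l<k. prevA A k $$ (l, j) * opoly G (k-1) l x y))"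
      using three_term_eq[OF T \<open>j \<le> k\<close>] by (intro ext)
    ultimately show ?thesis by simp
  qed
  then have "(\<lambda>x y. \<Sum>p\<in>(SIGMA k:{..<n}. {..k}). c p * (z x y * opoly G (fst p) (snd p) x y))
      \<in> lower_span G (Suc n)"
    by (intro lower_span_sum lower_span_cmult) auto
  moreover have "(\<lambda>x y. z x y * f x y) =
      (\<lambda>x y. \<Sum>p\<in>(SIGMA k:{..<n}. {..k}). c p * (z x y * opoly G (fst p) (snd p) x y))"
    unfolding f by (simp add: sum_distrib_left mult.left_commute)
  ultimately show ?thesis by simp
qed

lemma opoly_measurable: "(\<lambda>(x, y). opoly G n i x y) \<in> borel_measurable lborel"
  unfolding opoly_def case_prod_beta' measurable_lborel2
  by (intro borel_measurable_continuous_onI continuous_intros)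

lemma lower_span_continuous_x: "f \<in> lower_span G n \<Longrightarrow> continuous_on UNIV (\<lambda>x. f x y)"
  unfolding lower_span_def opoly_def by (auto intro!: continuous_intros)

text \<open>For \<open>j = k\<close> the exponent \<open>k - j - 1\<close> is truncated to 0, but that term carries the
  factor \<open>real (k - j) = 0\<close>.\<close>
definition opoly_dx :: "(nat \<Rightarrow> nat \<Rightarrow> real mat) \<Rightarrow> nat \<Rightarrow> nat \<Rightarrow> real \<Rightarrow> real \<Rightarrow> real" where
  "opoly_dx G n i x y = (\<Sum>k\<le>n. \<Sum>j\<le>k. G n k $$ (i, j) * (real (k - j) * x ^ (k - j - 1)) * y ^ j)"

lemma has_real_derivative_opoly_x:
  "((\<lambda>x. opoly G n i x y) has_real_derivative opoly_dx G n i x y) (at x)"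
proof -
  have "((\<lambda>x. x ^ m) has_real_derivative real m * x ^ (m - 1)) (at x)" for m
    using DERIV_pow[of m x] by simp
  then show ?thesis
    unfolding opoly_def opoly_dx_def by (intro DERIV_sum DERIV_cmult_right DERIV_cmult)
qed

lemma x_mult_opoly_dx:
  "x * opoly_dx G n i x y = (\<Sum>k\<le>n. \<Sum>j\<le>k. (G n k $$ (i, j) * real (k - j)) * x ^ (k - j) * y ^ j)"
proof -
  have x_mult: "x * (c * (real (k - j) * x ^ (k - j - 1)) * d) = (c * real (k - j)) * x ^ (k - j) * d"
    for c d :: real and k j :: nat
    by (cases "k - j") (auto simp: mult_ac)
  show ?thesis unfolding opoly_dx_def sum_distrib_left x_mult ..
qed

lemma opoly_dx_three_term:
  assumes "three_term G (\<lambda>x y. x) A" "i \<le> n"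
  shows "(\<Sum>k\<le>n + 1. A n $$ (i, k) * opoly_dx G (n + 1) k x y)
    = opoly G n i x y + x * opoly_dx G n i x y - (\<Sum>l<n. prevA A n $$ (l, i) * opoly_dx G (n - 1) l x y)"
proof -
  have "((\<lambda>x. x * opoly G n i x y) has_real_derivative 1 * opoly G n i x y + opoly_dx G n i x y * x) (at x)"
    by (rule DERIV_mult[OF DERIV_ident has_real_derivative_opoly_x])
  moreover have "(\<lambda>x. x * opoly G n i x y) = (\<lambda>x. (\<Sum>k\<le>n + 1. A n $$ (i, k) * opoly G (n + 1) k x y)
      + (\<Sum>l<n. prevA A n $$ (l, i) * opoly G (n - 1) l x y))"
    using three_term_eq[OF assms] by (intro ext)
  moreover have "((\<lambda>x. (\<Sum>k\<le>n + 1. A n $$ (i, k) * opoly G (n + 1) k x y)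
      + (\<Sum>l<n. prevA A n $$ (l, i) * opoly G (n - 1) l x y)) has_real_derivative
      (\<Sum>k\<le>n + 1. A n $$ (i, k) * opoly_dx G (n + 1) k x y)
      + (\<Sum>l<n. prevA A n $$ (l, i) * opoly_dx G (n - 1) l x y)) (at x)"
    by (intro DERIV_add DERIV_sum DERIV_cmult has_real_derivative_opoly_x)
  ultimately show ?thesis by (auto dest: DERIV_unique simp: algebra_simps)
qed

lemma weight_has_derivative_x:
  "((\<lambda>x. weight a40 a22 a04 a20 a02 x y) has_real_derivative
    - (4 * a40 * x ^ 3 + 2 * a22 * x * y ^ 2 + 2 * a20 * x) * weight a40 a22 a04 a20 a02 x y) (at x)"
proof -
  have "((\<lambda>x. qform a40 a22 a04 a20 a02 x y) has_real_derivative
      4 * a40 * x ^ 3 + 2 * a22 * x * y ^ 2 + 2 * a20 * x) (at x)"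
    unfolding qform_def by (auto intro!: derivative_eq_intros simp: eval_nat_numeral algebra_simps)
  from DERIV_chain2[OF DERIV_exp DERIV_minus[OF this]] show ?thesis
    by (simp add: weight_def mult.commute)
qed

lemma weight_nonneg: "0 \<le> weight a40 a22 a04 a20 a02 x y"
  by (simp add: weight_def)

lemma weight_measurable: "(\<lambda>(x, y). weight a40 a22 a04 a20 a02 x y) \<in> borel_measurable lborel"
  unfolding weight_def qform_def case_prod_beta' measurable_lborel2
  by (intro borel_measurable_continuous_onI continuous_intros)

lemma minv_eqI:
  assumes A: "A \<in> carrier_mat n n" and B: "B \<in> carrier_mat n n" and AB: "A * B = 1\<^sub>m n"
  shows "minv A = B"
proof -
  have BA: "B * A = 1\<^sub>m n" by (rule mat_mult_left_right_inverse[OF A B AB])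
  have "A \<in> Units (ring_mat TYPE(real) n undefined)"
    using A B AB BA unfolding Units_def ring_mat_def by auto
  then obtain C where C: "mat_inverse A = Some C"
    using mat_inverse(1)[OF A, where b=undefined] by (cases "mat_inverse A") auto
  from mat_inverse(2)[OF A C] have CA: "C * A = 1\<^sub>m n" and Cc: "C \<in> carrier_mat n n" by auto
  have "C = C * (A * B)" using Cc AB by simp
  also have "\<dots> = (C * A) * B" using Cc A B by simp
  also have "\<dots> = B" using CA B by simp
  finally show ?thesis unfolding minv_def C by simp
qed

lemma mult_N1_index:
  assumes "A \<in> carrier_mat m m" "i < m" "l < m"
  shows "(A * N1 m) $$ (i, l) = A $$ (i, l) * real (m - l)"
proof -
  have "(A * N1 m) $$ (i, l) = (\<Sum>k<m. A $$ (i, k) * (if k = l then real (m - k) else 0))"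
    using assms by (simp add: N1_def scalar_prod_def atLeast0LessThan)
  also have "\<dots> = (\<Sum>k<m. if k = l then A $$ (i, l) * real (m - l) else 0)"
    by (rule sum.cong) auto
  finally show ?thesis using assms by simp
qed

lemma mult_smult_add3:
  fixes A X Y Z :: "'a :: comm_semiring_0 mat"
  assumes "A \<in> carrier_mat r s" "X \<in> carrier_mat s c" "Y \<in> carrier_mat s c" "Z \<in> carrier_mat s c"
  shows "A * (a \<cdot>\<^sub>m X + b \<cdot>\<^sub>m Y + d \<cdot>\<^sub>m Z) = a \<cdot>\<^sub>m (A * X) + b \<cdot>\<^sub>m (A * Y) + d \<cdot>\<^sub>m (A * Z)"
proof -
  have "A * (a \<cdot>\<^sub>m X + b \<cdot>\<^sub>m Y + d \<cdot>\<^sub>m Z) = A * (a \<cdot>\<^sub>m X + b \<cdot>\<^sub>m Y) + A * (d \<cdot>\<^sub>m Z)"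
    using assms by (intro mult_add_distrib_mat) auto
  also have "A * (a \<cdot>\<^sub>m X + b \<cdot>\<^sub>m Y) = A * (a \<cdot>\<^sub>m X) + A * (b \<cdot>\<^sub>m Y)"
    using assms by (intro mult_add_distrib_mat) auto
  finally show ?thesis
    using mult_smult_distrib[OF assms(1,2)] mult_smult_distrib[OF assms(1,3)]
      mult_smult_distrib[OF assms(1,4)] by simp
qed

section \<open>Orthonormal systems with three term relations\<close>

locale orthonormal_three_term =
  fixes W :: "real \<Rightarrow> real \<Rightarrow> real" and G :: "nat \<Rightarrow> nat \<Rightarrow> real mat"
    and A1 A2 :: "nat \<Rightarrow> real mat"
  assumes orthonormal: "orthonormal_system W G"
    and three_term_x: "three_term G (\<lambda>x y. x) A1"
    and three_term_y: "three_term G (\<lambda>x y. y) A2"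
    and W_nonneg: "\<And>x y. 0 \<le> W x y"
    and W_measurable: "(\<lambda>(x, y). W x y) \<in> borel_measurable lborel"
begin

abbreviation P :: "nat \<Rightarrow> nat \<Rightarrow> real \<Rightarrow> real \<Rightarrow> real" where
  "P \<equiv> opoly G"

lemma G_carrier: "k \<le> n \<Longrightarrow> G n k \<in> carrier_mat (n + 1) (k + 1)"
  using orthonormal unfolding orthonormal_system_def by blast

lemma ip_P_P: "i \<le> n \<Longrightarrow> j \<le> m \<Longrightarrow> ip W (P n i) (P m j) = (if n = m \<and> i = j then 1 else 0)"
  using orthonormal unfolding orthonormal_system_def by blast

lemma ip_integrable_P_P:
  assumes "i \<le> n" "j \<le> m"
  shows "ip_integrable W (P n i) (P m j)"
proof -
  \<comment> \<open>A non-integrable function has integral 0, so \<open>(P n i, P n i) = 1\<close> forces integrability.\<close>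
  have square: "ip_integrable W (P k l) (P k l)" if "l \<le> k" for k l
    using ip_P_P[OF that that] not_integrable_integral_eq
    unfolding ip_def ip_integrable_def by fastforce
  have "integrable lborel (\<lambda>(x, y). P n i x y * P m j x y * W x y)"
  proof (rule Bochner_Integration.integrable_bound)
    show "integrable lborel (\<lambda>z. (\<lambda>(x, y). P n i x y * P n i x y * W x y) z +
        (\<lambda>(x, y). P m j x y * P m j x y * W x y) z)"
      using square[OF assms(1)] square[OF assms(2)]
      unfolding ip_integrable_def by (rule Bochner_Integration.integrable_add)
    show "(\<lambda>(x, y). P n i x y * P m j x y * W x y) \<in> borel_measurable lborel"
      using borel_measurable_times[OF borel_measurable_times[OF opoly_measurable opoly_measurable]
          W_measurable]
      by (simp add: case_prod_beta')
    have "\<bar>a * b\<bar> * w \<le> (a * a + b * b) * w" if "0 \<le> w" for a b w :: real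
    proof (rule mult_right_mono[OF _ that])
      have "2 * (\<bar>a\<bar> * \<bar>b\<bar>) \<le> a * a + b * b"
        using sum_squares_bound[of "\<bar>a\<bar>" "\<bar>b\<bar>"] by (simp add: power2_eq_square mult.assoc)
      moreover have "0 \<le> \<bar>a\<bar> * \<bar>b\<bar>" by simp
      ultimately show "\<bar>a * b\<bar> \<le> a * a + b * b"
        unfolding abs_mult by linarith
    qed
    then show "AE z in lborel. norm ((\<lambda>(x, y). P n i x y * P m j x y * W x y) z) \<le>
        norm ((\<lambda>(x, y). P n i x y * P n i x y * W x y) z + (\<lambda>(x, y). P m j x y * P m j x y * W x y) z)"
      using W_nonneg by (intro AE_I2) (auto simp: abs_mult distrib_right)
  qed
  then show ?thesis unfolding ip_integrable_def .
qed

lemma ip_integrable_lower_span: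
  assumes f: "f \<in> lower_span G m" and g: "g \<in> lower_span G n"
  shows "ip_integrable W f g"
proof -
  from f obtain c
    where f: "f = (\<lambda>x y. \<Sum>p\<in>(SIGMA k:{..<m}. {..k}). c p * P (fst p) (snd p) x y)"
    unfolding lower_span_def by blast
  from g obtain d
    where g: "g = (\<lambda>x y. \<Sum>q\<in>(SIGMA k:{..<n}. {..k}). d q * P (fst q) (snd q) x y)"
    unfolding lower_span_def by blast
  have "ip_integrable W g (P k l)" if "l \<le> k" for k l
    unfolding g by (intro ip_integrable_sum_left) (use that in \<open>auto intro: ip_integrable_P_P\<close>)
  then have "ip_integrable W (P (fst p) (snd p)) g" if "p \<in> (SIGMA k:{..<m}. {..k})" for p
    using that by (auto simp: ip_integrable_commute)
  then show ?thesis
    unfolding f by (intro ip_integrable_sum_left) auto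
qed

lemma ip_lower_span_P_eq_0:
  assumes f: "f \<in> lower_span G n" and "i \<le> n"
  shows "ip W f (P n i) = 0"
proof -
  from f obtain c
    where f: "f = (\<lambda>x y. \<Sum>p\<in>(SIGMA k:{..<n}. {..k}). c p * P (fst p) (snd p) x y)"
    unfolding lower_span_def by blast
  have "ip W f (P n i) = (\<Sum>p\<in>(SIGMA k:{..<n}. {..k}). c p * ip W (P (fst p) (snd p)) (P n i))"
    unfolding f using \<open>i \<le> n\<close> by (intro ip_sum_left) (auto intro: ip_integrable_P_P)
  also have "\<dots> = 0"
    using \<open>i \<le> n\<close> by (intro sum.neutral) (auto simp: ip_P_P)
  finally show ?thesis .
qed

lemma ip_P_eq_if_lower_span_diff:
  assumes diff: "(\<lambda>x y. f x y - g x y) \<in> lower_span G n" and g: "g \<in> lower_span G m"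
    and "j \<le> n"
  shows "ip W f (P n j) = ip W g (P n j)"
proof -
  have Pj: "P n j \<in> lower_span G (Suc n)" using \<open>j \<le> n\<close> by (intro opoly_in_lower_span) auto
  have "ip W f (P n j) = ip W (\<lambda>x y. g x y + (f x y - g x y)) (P n j)" by simp
  also have "\<dots> = ip W g (P n j) + ip W (\<lambda>x y. f x y - g x y) (P n j)"
    using diff g Pj by (intro ip_add_left ip_integrable_lower_span)
  also have "ip W (\<lambda>x y. f x y - g x y) (P n j) = 0"
    using diff \<open>j \<le> n\<close> by (rule ip_lower_span_P_eq_0)
  finally show ?thesis by simp
qed

lemma monomial_in_lower_span:
  "j \<le> k \<Longrightarrow> k < n \<Longrightarrow> (\<lambda>x y. x ^ (k - j) * y ^ j) \<in> lower_span G n"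
proof (induction k arbitrary: j n)
  case 0
  have "G 0 0 $$ (0, 0) \<noteq> 0"
    using orthonormal unfolding orthonormal_system_def by force
  moreover have "(\<lambda>x y. (1 / G 0 0 $$ (0, 0)) * P 0 0 x y) \<in> lower_span G n"
    using 0 by (intro lower_span_cmult opoly_in_lower_span) auto
  ultimately show ?case using 0 by (simp add: opoly_def)
next
  case (Suc k)
  show ?case
  proof (cases "j \<le> k")
    case True
    have "(\<lambda>x y. x * (x ^ (k - j) * y ^ j)) \<in> lower_span G (Suc k + 1)"
      using lower_span_mult_three_term[OF three_term_x Suc.IH[OF True]] by simp
    then have "(\<lambda>x y. x * (x ^ (k - j) * y ^ j)) \<in> lower_span G n"
      using lower_span_mono[of "Suc k + 1" n] Suc.prems by auto
    moreover have "Suc k - j = Suc (k - j)" using True by simp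
    ultimately show ?thesis by (simp add: mult.assoc)
  next
    case False
    then have "j = Suc k" using Suc.prems by simp
    have "(\<lambda>x y. y * (x ^ (k - k) * y ^ k)) \<in> lower_span G (Suc k + 1)"
      using lower_span_mult_three_term[OF three_term_y Suc.IH[of k]] by simp
    then have "(\<lambda>x y. y * (x ^ (k - k) * y ^ k)) \<in> lower_span G n"
      using lower_span_mono[of "Suc k + 1" n] Suc.prems by auto
    then show ?thesis using \<open>j = Suc k\<close> by simp
  qed
qed

lemma lower_order_terms_in_lower_span:
  "(\<lambda>x y. (\<Sum>k\<le>n. \<Sum>j\<le>k. c k j * x ^ (k - j) * y ^ j) - (\<Sum>j\<le>n. c n j * x ^ (n - j) * y ^ j))
    \<in> lower_span G n"
proof -
  have "(\<lambda>x y. \<Sum>k<n. \<Sum>j\<le>k. c k j * (x ^ (k - j) * y ^ j)) \<in> lower_span G n"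
    by (intro lower_span_sum lower_span_cmult monomial_in_lower_span) auto
  then show ?thesis by (simp add: lessThan_Suc_atMost[symmetric] mult.assoc)
qed

lemma ip_mat_P_P_same: "ip_mat W (n + 1) (n + 1) (P n) (P n) = 1\<^sub>m (n + 1)"
  by (rule eq_matI) (auto simp: ip_P_P)

lemma ip_mat_P_P_other: "k \<noteq> n \<Longrightarrow> r \<le> k + 1 \<Longrightarrow> ip_mat W r (n + 1) (P k) (P n) = 0\<^sub>m r (n + 1)"
  by (rule eq_matI) (auto simp: ip_P_P)

lemma ip_mat_P_lower_span_eq_0:
  "(\<And>j. j < c \<Longrightarrow> F j \<in> lower_span G m) \<Longrightarrow> r \<le> m + 1 \<Longrightarrow> ip_mat W r c (P m) F = 0\<^sub>m r c"
  by (rule eq_matI) (auto simp: ip_commute[of W "P m _"] ip_lower_span_P_eq_0)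

text \<open>Moving \<open>z\<close> to the other side of \<open>(P\<^sub>m, (z F)\<^sup>T)\<close> brings in the three term
  relation for \<open>P\<^sub>m\<close>. For \<open>m = 0\<close> the last matrix has no rows, matching
  \<open>A\<^sub>-\<^sub>1 = 0\<close>.\<close>
lemma ip_mat_mult_three_term:
  assumes T: "three_term G z A" and F: "\<And>j. j < c \<Longrightarrow> F j \<in> lower_span G N"
  shows "ip_mat W (m + 1) c (P m) (\<lambda>j x y. z x y * F j x y)
    = A m * ip_mat W (m + 2) c (P (m + 1)) F + transpose_mat (prevA A m) * ip_mat W m c (P (m - 1)) F"
proof -
  have Ac: "A m \<in> carrier_mat (m + 1) (m + 2)" by (rule three_term_carrier[OF T])
  have Bc: "transpose_mat (prevA A m) \<in> carrier_mat (m + 1) m"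
    using three_term_prevA_carrier[OF T] by simp
  have int: "ip_integrable W f (F j)" if "f \<in> lower_span G (m + 2)" "j < c" for f j
    using that F by (intro ip_integrable_lower_span)
  have "ip_mat W (m + 1) c (P m) (\<lambda>j x y. z x y * F j x y)
      = ip_mat W (m + 1) c (\<lambda>a x y. z x y * P m a x y) F"
    by (rule eq_matI) (auto simp: ip_def mult_ac)
  also have "\<dots> = ip_mat W (m + 1) c (\<lambda>a x y. (\<Sum>l<m + 2. A m $$ (a, l) * P (m + 1) l x y)
      + (\<Sum>l<m. transpose_mat (prevA A m) $$ (a, l) * P (m - 1) l x y)) F"
  proof (rule ip_mat_cong)
    fix a assume "a < m + 1"
    then show "(\<lambda>x y. z x y * P m a x y) = (\<lambda>x y. (\<Sum>l<m + 2. A m $$ (a, l) * P (m + 1) l x y)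
      + (\<Sum>l<m. transpose_mat (prevA A m) $$ (a, l) * P (m - 1) l x y))"
      using three_term_eq[OF T, of a m] three_term_prevA_carrier[OF T, of m]
      by (auto simp: lessThan_Suc_atMost[symmetric] numeral_2_eq_2)
  qed simp
  also have "\<dots> = ip_mat W (m + 1) c (\<lambda>a x y. \<Sum>l<m + 2. A m $$ (a, l) * P (m + 1) l x y) F
      + ip_mat W (m + 1) c (\<lambda>a x y. \<Sum>l<m. transpose_mat (prevA A m) $$ (a, l) * P (m - 1) l x y) F"
    by (intro ip_mat_add_left int lower_span_sum lower_span_cmult opoly_in_lower_span) auto
  also have "\<dots> = A m * ip_mat W (m + 2) c (P (m + 1)) F
      + transpose_mat (prevA A m) * ip_mat W m c (P (m - 1)) F"
    using Ac Bc by (simp add: mult_ip_mat int opoly_in_lower_span)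
  finally show ?thesis .
qed

lemma ip_mat_mult_next:
  assumes T: "three_term G z A"
  shows "ip_mat W (n + 2) (n + 1) (P (n + 1)) (\<lambda>j x y. z x y * P n j x y) = transpose_mat (A n)"
proof -
  have "ip_mat W (n + 1 + 1) (n + 1) (P (n + 1)) (\<lambda>j x y. z x y * P n j x y)
      = A (n + 1) * ip_mat W (n + 3) (n + 1) (P (n + 2)) (P n)
        + transpose_mat (prevA A (n + 1)) * ip_mat W (n + 1) (n + 1) (P n) (P n)"
    using ip_mat_mult_three_term[OF T, of "n + 1" "P n" "Suc n" "n + 1"]
    by (simp add: opoly_in_lower_span numeral_3_eq_3 numeral_2_eq_2)
  also have "\<dots> = A (n + 1) * 0\<^sub>m (n + 3) (n + 1) + transpose_mat (A n) * 1\<^sub>m (n + 1)"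
    using ip_mat_P_P_other[of "n + 2" n "n + 3"] ip_mat_P_P_same[of n] by (simp add: prevA_def)
  also have "\<dots> = transpose_mat (A n)"
    using three_term_carrier[OF T, of "n + 1"] three_term_carrier[OF T, of n] by simp
  finally show ?thesis by simp
qed

lemma ip_mat_mult_prev:
  assumes T: "three_term G z A"
  shows "ip_mat W n (n + 1) (P (n - 1)) (\<lambda>j x y. z x y * P n j x y) = prevA A n"
proof (cases n)
  case 0
  then show ?thesis by (intro eq_matI) (auto simp: prevA_def)
next
  case (Suc k)
  have "ip_mat W (k + 1) (k + 2) (P k) (\<lambda>j x y. z x y * P (k + 1) j x y)
      = A k * ip_mat W (k + 2) (k + 2) (P (k + 1)) (P (k + 1))
        + transpose_mat (prevA A k) * ip_mat W k (k + 2) (P (k - 1)) (P (k + 1))"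
    by (rule ip_mat_mult_three_term[OF T, where N = "k + 2"]) (auto intro: opoly_in_lower_span)
  also have "\<dots> = A k * 1\<^sub>m (k + 2) + transpose_mat (prevA A k) * 0\<^sub>m k (k + 2)"
    using ip_mat_P_P_same[of "k + 1"] ip_mat_P_P_other[of "k - 1" "k + 1" k] by simp
  also have "\<dots> = A k"
    using three_term_carrier[OF T, of k] three_term_prevA_carrier[OF T, of k] by simp
  finally show ?thesis using Suc by (simp add: prevA_def)
qed

lemma ip_mat_mult2_next2:
  assumes TA: "three_term G z A" and TB: "three_term G w B"
  shows "ip_mat W (n + 3) (n + 1) (P (n + 2)) (\<lambda>j x y. w x y * (z x y * P n j x y))
    = transpose_mat (B (n + 1)) * transpose_mat (A n)"
proof -
  have zP: "(\<lambda>x y. z x y * P n j x y) \<in> lower_span G (n + 2)" if "j < n + 1" for j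
    using lower_span_mult_three_term[OF TA opoly_in_lower_span[of j n "Suc n"]] that by simp
  have "ip_mat W (n + 2 + 1) (n + 1) (P (n + 2)) (\<lambda>j x y. w x y * (z x y * P n j x y))
      = B (n + 2) * ip_mat W (n + 4) (n + 1) (P (n + 3)) (\<lambda>j x y. z x y * P n j x y)
        + transpose_mat (prevA B (n + 2)) * ip_mat W (n + 2) (n + 1) (P (n + 1)) (\<lambda>j x y. z x y * P n j x y)"
    using ip_mat_mult_three_term[OF TB, of "n + 1" "\<lambda>j x y. z x y * P n j x y" "n + 2" "n + 2"] zP
    by (simp add: numeral_eq_Suc)
  also have "ip_mat W (n + 4) (n + 1) (P (n + 3)) (\<lambda>j x y. z x y * P n j x y) = 0\<^sub>m (n + 4) (n + 1)"
    using zP lower_span_mono[of "n + 2" "n + 3"] by (intro ip_mat_P_lower_span_eq_0) auto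
  also have "B (n + 2) * 0\<^sub>m (n + 4) (n + 1) = 0\<^sub>m (n + 3) (n + 1)"
    using three_term_carrier[OF TB, of "n + 2"] by (simp add: numeral_eq_Suc)
  also have "transpose_mat (prevA B (n + 2)) = transpose_mat (B (n + 1))"
    by (simp add: prevA_def numeral_eq_Suc)
  also have "ip_mat W (n + 2) (n + 1) (P (n + 1)) (\<lambda>j x y. z x y * P n j x y) = transpose_mat (A n)"
    by (rule ip_mat_mult_next[OF TA])
  also have "0\<^sub>m (n + 3) (n + 1) + transpose_mat (B (n + 1)) * transpose_mat (A n)
      = transpose_mat (B (n + 1)) * transpose_mat (A n)"
    using three_term_carrier[OF TB, of "n + 1"] three_term_carrier[OF TA, of n]
    by (simp add: numeral_eq_Suc)
  finally show ?thesis by (simp add: numeral_eq_Suc)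
qed

lemma ip_mat_mult2_same:
  assumes TA: "three_term G z A" and TB: "three_term G w B"
  shows "ip_mat W (n + 1) (n + 1) (P n) (\<lambda>j x y. w x y * (z x y * P n j x y))
    = B n * transpose_mat (A n) + transpose_mat (prevA B n) * prevA A n"
proof -
  have "(\<lambda>x y. z x y * P n j x y) \<in> lower_span G (n + 2)" if "j < n + 1" for j
    using lower_span_mult_three_term[OF TA opoly_in_lower_span[of j n "Suc n"]] that by simp
  then have "ip_mat W (n + 1) (n + 1) (P n) (\<lambda>j x y. w x y * (z x y * P n j x y))
      = B n * ip_mat W (n + 2) (n + 1) (P (n + 1)) (\<lambda>j x y. z x y * P n j x y)
        + transpose_mat (prevA B n) * ip_mat W n (n + 1) (P (n - 1)) (\<lambda>j x y. z x y * P n j x y)"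
    by (rule ip_mat_mult_three_term[OF TB])
  then show ?thesis
    unfolding ip_mat_mult_next[OF TA] ip_mat_mult_prev[OF TA] .
qed

lemma ip_mat_mult3_next:
  assumes TA: "three_term G z A" and TB: "three_term G w B" and TC: "three_term G v C"
  shows "ip_mat W (n + 2) (n + 1) (P (n + 1)) (\<lambda>j x y. v x y * (w x y * (z x y * P n j x y)))
    = (C (n + 1) * transpose_mat (B (n + 1))) * transpose_mat (A n)
      + transpose_mat (C n) * (B n * transpose_mat (A n) + transpose_mat (prevA B n) * prevA A n)"
proof -
  have "(\<lambda>x y. w x y * (z x y * P n j x y)) \<in> lower_span G (n + 3)" if "j < n + 1" for j
    using lower_span_mult_three_term[OF TB lower_span_mult_three_term[OF TA
        opoly_in_lower_span[of j n "Suc n"]]] that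
    by (simp add: numeral_eq_Suc)
  then have "ip_mat W (n + 1 + 1) (n + 1) (P (n + 1)) (\<lambda>j x y. v x y * (w x y * (z x y * P n j x y)))
      = C (n + 1) * ip_mat W (n + 3) (n + 1) (P (n + 2)) (\<lambda>j x y. w x y * (z x y * P n j x y))
        + transpose_mat (prevA C (n + 1)) * ip_mat W (n + 1) (n + 1) (P n) (\<lambda>j x y. w x y * (z x y * P n j x y))"
    using ip_mat_mult_three_term[OF TC, of "n + 1" _ "n + 3" "n + 1"]
    by (simp add: numeral_eq_Suc)
  also have "\<dots> = C (n + 1) * (transpose_mat (B (n + 1)) * transpose_mat (A n))
      + transpose_mat (C n) * (B n * transpose_mat (A n) + transpose_mat (prevA B n) * prevA A n)"
    unfolding ip_mat_mult2_next2[OF TA TB] ip_mat_mult2_same[OF TA TB] by (simp add: prevA_def)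
  also have "C (n + 1) * (transpose_mat (B (n + 1)) * transpose_mat (A n))
      = (C (n + 1) * transpose_mat (B (n + 1))) * transpose_mat (A n)"
    using three_term_carrier[OF TC, of "n + 1"] three_term_carrier[OF TB, of "n + 1"]
      three_term_carrier[OF TA, of n]
    by (intro assoc_mult_mat[symmetric]) auto
  finally show ?thesis by simp
qed

lemma leading_mult_ip_mat_monomials:
  "G n n * ip_mat W (n + 1) (n + 1) (\<lambda>l x y. x ^ (n - l) * y ^ l) (P n) = 1\<^sub>m (n + 1)"
proof -
  have mono: "(\<lambda>x y. x ^ (n - l) * y ^ l) \<in> lower_span G (n + 1)" if "l \<le> n" for l
    using that by (intro monomial_in_lower_span) auto
  have "G n n * ip_mat W (n + 1) (n + 1) (\<lambda>l x y. x ^ (n - l) * y ^ l) (P n)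
      = ip_mat W (n + 1) (n + 1) (\<lambda>i x y. \<Sum>l<n + 1. G n n $$ (i, l) * (x ^ (n - l) * y ^ l)) (P n)"
  proof (rule mult_ip_mat[OF G_carrier[of n n] ip_integrable_lower_span[OF mono opoly_in_lower_span]])
    fix l j assume "l < n + 1" "j < n + 1"
    then show "l \<le> n" "j \<le> n" "n < n + 1" by auto
  qed simp
  also have "\<dots> = ip_mat W (n + 1) (n + 1) (P n) (P n)"
  proof (rule eq_matI)
    fix i j assume "i < dim_row (ip_mat W (n + 1) (n + 1) (P n) (P n))"
      "j < dim_col (ip_mat W (n + 1) (n + 1) (P n) (P n))"
    then have "i \<le> n" "j \<le> n" by auto
    have "ip W (P n i) (P n j) = ip W (\<lambda>x y. \<Sum>l<n + 1. G n n $$ (i, l) * (x ^ (n - l) * y ^ l)) (P n j)"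
    proof (rule ip_P_eq_if_lower_span_diff[OF _ _ \<open>j \<le> n\<close>])
      show "(\<lambda>x y. P n i x y - (\<Sum>l<n + 1. G n n $$ (i, l) * (x ^ (n - l) * y ^ l))) \<in> lower_span G n"
        using lower_order_terms_in_lower_span[where n = n and c = "\<lambda>k j. G n k $$ (i, j)"]
        by (simp add: opoly_def lessThan_Suc_atMost mult.assoc)
      show "(\<lambda>x y. \<Sum>l<n + 1. G n n $$ (i, l) * (x ^ (n - l) * y ^ l)) \<in> lower_span G (n + 1)"
        using mono by (intro lower_span_sum lower_span_cmult) auto
    qed
    then show "ip_mat W (n + 1) (n + 1) (\<lambda>i x y. \<Sum>l<n + 1. G n n $$ (i, l) * (x ^ (n - l) * y ^ l)) (P n) $$ (i, j)
        = ip_mat W (n + 1) (n + 1) (P n) (P n) $$ (i, j)"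
      using \<open>i \<le> n\<close> \<open>j \<le> n\<close> by simp
  qed simp_all
  finally show ?thesis using ip_mat_P_P_same[of n] by simp
qed

lemma minv_leading:
  "minv (G n n) = ip_mat W (n + 1) (n + 1) (\<lambda>l x y. x ^ (n - l) * y ^ l) (P n)"
  using G_carrier[of n n] leading_mult_ip_mat_monomials by (intro minv_eqI) auto

lemma leading_mult_minv: "G n n * minv (G n n) = 1\<^sub>m (n + 1)"
  unfolding minv_leading by (rule leading_mult_ip_mat_monomials)

lemma opoly_dx_in_lower_span: "opoly_dx G n i \<in> lower_span G n"
proof -
  have "(\<lambda>x y. G n k $$ (i, j) * (real (k - j) * x ^ (k - j - 1)) * y ^ j) \<in> lower_span G n"
    if "k \<le> n" "j \<le> k" for k j
  proof (cases "j = k")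
    case True
    then show ?thesis using lower_span_0[of G n] by simp
  next
    case False
    then have "(\<lambda>x y. (G n k $$ (i, j) * real (k - j)) * (x ^ ((k - 1) - j) * y ^ j)) \<in> lower_span G n"
      using that by (intro lower_span_cmult monomial_in_lower_span) auto
    moreover have "k - j - 1 = (k - 1) - j" by simp
    ultimately show ?thesis by (simp add: mult_ac)
  qed
  then have "(\<lambda>x y. \<Sum>k\<le>n. \<Sum>j\<le>k. G n k $$ (i, j) * (real (k - j) * x ^ (k - j - 1)) * y ^ j)
      \<in> lower_span G n"
    by (intro lower_span_sum) auto
  then show ?thesis unfolding opoly_dx_def[abs_def] .
qed

text \<open>Differentiating \<open>x P\<^sub>n = A\<^sub>n P\<^sub>n\<^sub>+\<^sub>1 + A\<^sub>n\<^sub>-\<^sub>1\<^sup>T P\<^sub>n\<^sub>-\<^sub>1\<close> gives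
  \<open>A\<^sub>n \<partial>\<^sub>x P\<^sub>n\<^sub>+\<^sub>1 = P\<^sub>n + x \<partial>\<^sub>x P\<^sub>n + (lower degree)\<close>; on the top degree part
  \<open>G\<^sub>n \<bbbX>\<^sub>n\<close> of \<open>P\<^sub>n\<close> the operator \<open>1 + x \<partial>\<^sub>x\<close> acts as \<open>N\<^sub>n\<^sub>+\<^sub>1\<^sub>,\<^sub>1\<close>.\<close>
lemma A1_mult_opoly_dx_leading:
  assumes "i \<le> n"
  shows "(\<lambda>x y. (\<Sum>k<n + 2. A1 n $$ (i, k) * opoly_dx G (n + 1) k x y)
      - (\<Sum>l<n + 1. (G n n * N1 (n + 1)) $$ (i, l) * (x ^ (n - l) * y ^ l))) \<in> lower_span G n"
proof -
  have "(\<lambda>x y. P n i x y - (\<Sum>l\<le>n. G n n $$ (i, l) * x ^ (n - l) * y ^ l)) \<in> lower_span G n"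
    using lower_order_terms_in_lower_span[where n = n and c = "\<lambda>k j. G n k $$ (i, j)"]
    by (simp add: opoly_def)
  moreover have "(\<lambda>x y. x * opoly_dx G n i x y
      - (\<Sum>l\<le>n. (G n n $$ (i, l) * real (n - l)) * x ^ (n - l) * y ^ l)) \<in> lower_span G n"
    using lower_order_terms_in_lower_span[where n = n and c = "\<lambda>k j. G n k $$ (i, j) * real (k - j)"]
    by (simp add: x_mult_opoly_dx)
  moreover have "(\<lambda>x y. \<Sum>l<n. prevA A1 n $$ (l, i) * opoly_dx G (n - 1) l x y) \<in> lower_span G n"
    using lower_span_mono[of "n - 1" n] opoly_dx_in_lower_span
    by (intro lower_span_sum lower_span_cmult) auto
  ultimately have "(\<lambda>x y. (P n i x y - (\<Sum>l\<le>n. G n n $$ (i, l) * x ^ (n - l) * y ^ l))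
      + (x * opoly_dx G n i x y - (\<Sum>l\<le>n. (G n n $$ (i, l) * real (n - l)) * x ^ (n - l) * y ^ l))
      - (\<Sum>l<n. prevA A1 n $$ (l, i) * opoly_dx G (n - 1) l x y)) \<in> lower_span G n"
    by (rule lower_span_diff[OF lower_span_add])
  moreover have "(\<Sum>k<n + 2. A1 n $$ (i, k) * opoly_dx G (n + 1) k x y)
      = P n i x y + x * opoly_dx G n i x y - (\<Sum>l<n. prevA A1 n $$ (l, i) * opoly_dx G (n - 1) l x y)"
    for x y
  proof -
    have "{..<n + 2} = {..n + 1}" by auto
    then show ?thesis using opoly_dx_three_term[OF three_term_x assms] by simp
  qed
  moreover have "(\<Sum>l<n + 1. (G n n * N1 (n + 1)) $$ (i, l) * (x ^ (n - l) * y ^ l))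
      = (\<Sum>l\<le>n. G n n $$ (i, l) * x ^ (n - l) * y ^ l)
        + (\<Sum>l\<le>n. (G n n $$ (i, l) * real (n - l)) * x ^ (n - l) * y ^ l)" for x y
    using G_carrier[of n n] assms
    by (simp add: lessThan_Suc_atMost mult_N1_index sum.distrib[symmetric] Suc_diff_le algebra_simps)
  ultimately show ?thesis
    by (simp add: diff_add_eq diff_diff_eq add_diff_eq add_ac)
qed

lemma ip_mat_A1_opoly_dx_leading:
  "ip_mat W (n + 1) (n + 1) (\<lambda>i x y. \<Sum>k<n + 2. A1 n $$ (i, k) * opoly_dx G (n + 1) k x y) (P n)
    = ip_mat W (n + 1) (n + 1)
        (\<lambda>i x y. \<Sum>l<n + 1. (G n n * N1 (n + 1)) $$ (i, l) * (x ^ (n - l) * y ^ l)) (P n)"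
proof (rule eq_matI)
  fix i j assume "i < dim_row (ip_mat W (n + 1) (n + 1)
      (\<lambda>i x y. \<Sum>l<n + 1. (G n n * N1 (n + 1)) $$ (i, l) * (x ^ (n - l) * y ^ l)) (P n))"
    "j < dim_col (ip_mat W (n + 1) (n + 1)
      (\<lambda>i x y. \<Sum>l<n + 1. (G n n * N1 (n + 1)) $$ (i, l) * (x ^ (n - l) * y ^ l)) (P n))"
  then have i: "i \<le> n" and j: "j \<le> n" by auto
  have "(\<lambda>x y. \<Sum>l<n + 1. (G n n * N1 (n + 1)) $$ (i, l) * (x ^ (n - l) * y ^ l)) \<in> lower_span G (n + 1)"
    by (intro lower_span_sum lower_span_cmult monomial_in_lower_span) auto
  from ip_P_eq_if_lower_span_diff[OF A1_mult_opoly_dx_leading[OF i] this j]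
  show "ip_mat W (n + 1) (n + 1) (\<lambda>i x y. \<Sum>k<n + 2. A1 n $$ (i, k) * opoly_dx G (n + 1) k x y) (P n) $$ (i, j)
    = ip_mat W (n + 1) (n + 1)
        (\<lambda>i x y. \<Sum>l<n + 1. (G n n * N1 (n + 1)) $$ (i, l) * (x ^ (n - l) * y ^ l)) (P n) $$ (i, j)"
    using i j by simp
qed auto

end

locale quartic_three_term = orthonormal_three_term +
  fixes a40 a22 a04 a20 a02 :: real
  assumes weight_eq: "W = weight a40 a22 a04 a20 a02"
begin

lemma dq_x_mult_expand:
  "(4 * a40 * x ^ 3 + 2 * a22 * x * y ^ 2 + 2 * a20 * x) * p
    = 4 * a40 * (x * (x * (x * p))) + 2 * a22 * (y * (x * (y * p))) + 2 * a20 * (x * p)"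
  by (simp add: algebra_simps power2_eq_square power3_eq_cube)

lemma dq_x_mult_in_lower_span:
  assumes g: "g \<in> lower_span G n"
  shows "(\<lambda>x y. (4 * a40 * x ^ 3 + 2 * a22 * x * y ^ 2 + 2 * a20 * x) * g x y) \<in> lower_span G (n + 3)"
proof -
  have gx: "(\<lambda>x y. x * g x y) \<in> lower_span G (Suc n)"
    by (rule lower_span_mult_three_term[OF three_term_x g])
  have "(\<lambda>x y. x * (x * (x * g x y))) \<in> lower_span G (Suc (Suc (Suc n)))"
    by (intro lower_span_mult_three_term[OF three_term_x] gx)
  moreover have "(\<lambda>x y. y * (x * (y * g x y))) \<in> lower_span G (Suc (Suc (Suc n)))"
    by (intro lower_span_mult_three_term[OF three_term_x] lower_span_mult_three_term[OF three_term_y] g)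
  moreover have "(\<lambda>x y. x * g x y) \<in> lower_span G (Suc (Suc (Suc n)))"
    using gx lower_span_mono[of "Suc n" "Suc (Suc (Suc n))"] by auto
  ultimately have "(\<lambda>x y. 4 * a40 * (x * (x * (x * g x y))) + 2 * a22 * (y * (x * (y * g x y)))
      + 2 * a20 * (x * g x y)) \<in> lower_span G (Suc (Suc (Suc n)))"
    by (intro lower_span_add lower_span_cmult)
  then show ?thesis unfolding dq_x_mult_expand by (simp add: numeral_3_eq_3)
qed

text \<open>Integration by parts against \<open>W = e\<^sup>-\<^sup>q\<close>: the boundary terms vanish because every
  product of polynomials is \<open>W\<close>-integrable, and \<open>\<partial>\<^sub>x W = - (\<partial>\<^sub>x q) W\<close>.\<close>
lemma ip_by_parts_x:
  assumes f: "\<And>x y. ((\<lambda>x. f x y) has_real_derivative df x y) (at x)"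
    and g: "\<And>x y. ((\<lambda>x. g x y) has_real_derivative dg x y) (at x)"
    and sf: "f \<in> lower_span G na" and sg: "g \<in> lower_span G nb"
    and sdf: "df \<in> lower_span G nc" and sdg: "dg \<in> lower_span G nd"
  shows "ip W df g + ip W f dg = ip W f (\<lambda>x y. (4 * a40 * x ^ 3 + 2 * a22 * x * y ^ 2 + 2 * a20 * x) * g x y)"
proof -
  define qg where "qg = (\<lambda>x y. (4 * a40 * x ^ 3 + 2 * a22 * x * y ^ 2 + 2 * a20 * x) * g x y)"
  have sqg: "qg \<in> lower_span G (nb + 3)"
    unfolding qg_def by (rule dq_x_mult_in_lower_span[OF sg])
  have int: "ip_integrable W df g" "ip_integrable W f dg" "ip_integrable W f qg" "ip_integrable W f g"
    using sf sg sdf sdg sqg by (auto intro: ip_integrable_lower_span)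
  define h where "h = (\<lambda>x y. df x y * g x y * W x y + f x y * dg x y * W x y - f x y * qg x y * W x y)"
  have deriv: "((\<lambda>x. f x y * g x y * W x y) has_real_derivative h x y) (at x)" for x y
  proof -
    have "((\<lambda>x. f x y * g x y * W x y) has_real_derivative (df x y * g x y + dg x y * f x y) * W x y
        + - (4 * a40 * x ^ 3 + 2 * a22 * x * y ^ 2 + 2 * a20 * x) * W x y * (f x y * g x y)) (at x)"
      unfolding weight_eq by (rule DERIV_mult[OF DERIV_mult[OF f g] weight_has_derivative_x])
    moreover have "(df x y * g x y + dg x y * f x y) * W x y
        + - (4 * a40 * x ^ 3 + 2 * a22 * x * y ^ 2 + 2 * a20 * x) * W x y * (f x y * g x y) = h x y"
      unfolding h_def qg_def by (simp add: algebra_simps)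
    ultimately show ?thesis by simp
  qed
  have cont: "continuous_on UNIV (\<lambda>x. h x y)" for y
    unfolding h_def weight_eq weight_def qform_def
    by (intro continuous_intros lower_span_continuous_x[OF sf] lower_span_continuous_x[OF sg]
        lower_span_continuous_x[OF sdf] lower_span_continuous_x[OF sdg] lower_span_continuous_x[OF sqg])
  have h_eq: "(\<lambda>(x, y). h x y) = (\<lambda>z. (\<lambda>(x, y). df x y * g x y * W x y) z
      + (\<lambda>(x, y). f x y * dg x y * W x y) z - (\<lambda>(x, y). f x y * qg x y * W x y) z)"
    unfolding h_def by (auto simp: fun_eq_iff)
  have "integrable lborel (\<lambda>(x, y). h x y)"
    unfolding h_eq using int unfolding ip_integrable_def
    by (intro Bochner_Integration.integrable_add Bochner_Integration.integrable_diff)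
  then have "integral\<^sup>L lborel (\<lambda>(x, y). h x y) = 0"
    using int(4) unfolding ip_integrable_def by (intro integral_partial_x_eq_0[OF deriv cont])
  moreover have "integral\<^sup>L lborel (\<lambda>(x, y). h x y) = ip W df g + ip W f dg - ip W f qg"
    unfolding h_eq ip_def using int unfolding ip_integrable_def
    by (simp add: Bochner_Integration.integral_add Bochner_Integration.integral_diff
        Bochner_Integration.integrable_add)
  ultimately show ?thesis unfolding qg_def by simp
qed

lemma ip_mat_dq_x_by_parts:
  "ip_mat W (n + 2) (n + 1) (P (n + 1)) (\<lambda>j x y. (4 * a40 * x ^ 3 + 2 * a22 * x * y ^ 2 + 2 * a20 * x) * P n j x y)
    = ip_mat W (n + 2) (n + 1) (opoly_dx G (n + 1)) (P n)"
proof (rule eq_matI)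
  fix k j assume "k < dim_row (ip_mat W (n + 2) (n + 1) (opoly_dx G (n + 1)) (P n))"
    "j < dim_col (ip_mat W (n + 2) (n + 1) (opoly_dx G (n + 1)) (P n))"
  then have k: "k \<le> n + 1" and j: "j \<le> n" by auto
  have "ip W (opoly_dx G (n + 1) k) (P n j) + ip W (P (n + 1) k) (opoly_dx G n j)
      = ip W (P (n + 1) k) (\<lambda>x y. (4 * a40 * x ^ 3 + 2 * a22 * x * y ^ 2 + 2 * a20 * x) * P n j x y)"
    by (rule ip_by_parts_x[OF has_real_derivative_opoly_x has_real_derivative_opoly_x
        opoly_in_lower_span[of k "n + 1" "n + 2"] opoly_in_lower_span[of j n "n + 1"]
        opoly_dx_in_lower_span opoly_dx_in_lower_span]) (use k j in auto)
  moreover have "ip W (P (n + 1) k) (opoly_dx G n j) = 0"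
    using ip_lower_span_P_eq_0[OF subsetD[OF lower_span_mono opoly_dx_in_lower_span] k, of n j]
    by (simp add: ip_commute)
  ultimately show "ip_mat W (n + 2) (n + 1) (P (n + 1))
      (\<lambda>j x y. (4 * a40 * x ^ 3 + 2 * a22 * x * y ^ 2 + 2 * a20 * x) * P n j x y) $$ (k, j)
    = ip_mat W (n + 2) (n + 1) (opoly_dx G (n + 1)) (P n) $$ (k, j)"
    using k j by simp
qed auto

lemma A1_mult_ip_mat_dq_x_leading:
  "A1 n * ip_mat W (n + 2) (n + 1) (P (n + 1))
      (\<lambda>j x y. (4 * a40 * x ^ 3 + 2 * a22 * x * y ^ 2 + 2 * a20 * x) * P n j x y)
    = G n n * N1 (n + 1) * minv (G n n)"
proof -
  have mono: "(\<lambda>x y. x ^ (n - l) * y ^ l) \<in> lower_span G (n + 1)" if "l < n + 1" for l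
    using that by (intro monomial_in_lower_span) auto
  have GN: "G n n * N1 (n + 1) \<in> carrier_mat (n + 1) (n + 1)"
    using G_carrier[of n n] by (simp add: N1_def)
  have "A1 n * ip_mat W (n + 2) (n + 1) (P (n + 1))
      (\<lambda>j x y. (4 * a40 * x ^ 3 + 2 * a22 * x * y ^ 2 + 2 * a20 * x) * P n j x y)
    = A1 n * ip_mat W (n + 2) (n + 1) (opoly_dx G (n + 1)) (P n)"
    by (simp only: ip_mat_dq_x_by_parts)
  also have "\<dots> = ip_mat W (n + 1) (n + 1)
      (\<lambda>i x y. \<Sum>k<n + 2. A1 n $$ (i, k) * opoly_dx G (n + 1) k x y) (P n)"
  proof (rule mult_ip_mat[OF three_term_carrier[OF three_term_x]])
    fix k j assume "k < n + 2" "j < n + 1"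
    then show "ip_integrable W (opoly_dx G (n + 1) k) (P n j)"
      by (intro ip_integrable_lower_span[OF opoly_dx_in_lower_span opoly_in_lower_span]) auto
  qed
  also have "\<dots> = ip_mat W (n + 1) (n + 1)
      (\<lambda>i x y. \<Sum>l<n + 1. (G n n * N1 (n + 1)) $$ (i, l) * (x ^ (n - l) * y ^ l)) (P n)"
    by (rule ip_mat_A1_opoly_dx_leading)
  also have "\<dots> = (G n n * N1 (n + 1)) * ip_mat W (n + 1) (n + 1) (\<lambda>l x y. x ^ (n - l) * y ^ l) (P n)"
  proof (rule mult_ip_mat[OF GN, symmetric])
    fix l j assume "l < n + 1" "j < n + 1"
    then show "ip_integrable W (\<lambda>x y. x ^ (n - l) * y ^ l) (P n j)"
      by (intro ip_integrable_lower_span[OF mono opoly_in_lower_span]) auto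
  qed
  finally show ?thesis by (simp only: minv_leading)
qed

lemma ip_mat_dq_x_three_term:
  "ip_mat W (n + 2) (n + 1) (P (n + 1))
      (\<lambda>j x y. (4 * a40 * x ^ 3 + 2 * a22 * x * y ^ 2 + 2 * a20 * x) * P n j x y)
    = (4 * a40) \<cdot>\<^sub>m ((A1 (n+1) * transpose_mat (A1 (n+1))) * transpose_mat (A1 n)
        + transpose_mat (A1 n) * (A1 n * transpose_mat (A1 n) + transpose_mat (prevA A1 n) * prevA A1 n))
      + (2 * a22) \<cdot>\<^sub>m ((A2 (n+1) * transpose_mat (A1 (n+1))) * transpose_mat (A2 n)
        + transpose_mat (A2 n) * (A1 n * transpose_mat (A2 n) + transpose_mat (prevA A1 n) * prevA A2 n))
      + (2 * a20) \<cdot>\<^sub>m transpose_mat (A1 n)"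
proof -
  have Px: "(\<lambda>x y. x * P n j x y) \<in> lower_span G (Suc (Suc n))" if "j < n + 1" for j
    using that by (intro lower_span_mult_three_term[OF three_term_x] opoly_in_lower_span) auto
  have xxx: "(\<lambda>x y. x * (x * (x * P n j x y))) \<in> lower_span G (n + 4)" if "j < n + 1" for j
    using Px[OF that] by (simp add: numeral_eq_Suc lower_span_mult_three_term[OF three_term_x])
  have yxy: "(\<lambda>x y. y * (x * (y * P n j x y))) \<in> lower_span G (n + 4)" if "j < n + 1" for j
    using that by (simp add: numeral_eq_Suc opoly_in_lower_span
        lower_span_mult_three_term[OF three_term_x] lower_span_mult_three_term[OF three_term_y])
  have x: "(\<lambda>x y. x * P n j x y) \<in> lower_span G (n + 4)" if "j < n + 1" for j
    using Px[OF that] lower_span_mono[of "Suc (Suc n)" "n + 4"] by auto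
  have int: "ip_integrable W (P (Suc n) i) h" if "i < Suc (Suc n)" "h \<in> lower_span G (n + 4)" for i h
    using that by (intro ip_integrable_lower_span[OF opoly_in_lower_span[of i "Suc n" "Suc (Suc n)"]]) auto
  have "ip_mat W (n + 2) (n + 1) (P (n + 1))
      (\<lambda>j x y. (4 * a40 * x ^ 3 + 2 * a22 * x * y ^ 2 + 2 * a20 * x) * P n j x y)
    = ip_mat W (n + 2) (n + 1) (P (n + 1)) (\<lambda>j x y. 4 * a40 * (x * (x * (x * P n j x y)))
      + 2 * a22 * (y * (x * (y * P n j x y))) + 2 * a20 * (x * P n j x y))"
    by (rule ip_mat_cong) (simp_all add: dq_x_mult_expand)
  also have "\<dots> = ip_mat W (n + 2) (n + 1) (P (n + 1)) (\<lambda>j x y. 4 * a40 * (x * (x * (x * P n j x y))))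
      + ip_mat W (n + 2) (n + 1) (P (n + 1)) (\<lambda>j x y. 2 * a22 * (y * (x * (y * P n j x y))))
      + ip_mat W (n + 2) (n + 1) (P (n + 1)) (\<lambda>j x y. 2 * a20 * (x * P n j x y))"
    by (subst ip_mat_add_right; (subst ip_mat_add_right)?)
       (auto intro!: int lower_span_add lower_span_cmult xxx yxy x)
  also have "\<dots> = (4 * a40) \<cdot>\<^sub>m ((A1 (n+1) * transpose_mat (A1 (n+1))) * transpose_mat (A1 n)
        + transpose_mat (A1 n) * (A1 n * transpose_mat (A1 n) + transpose_mat (prevA A1 n) * prevA A1 n))
      + (2 * a22) \<cdot>\<^sub>m ((A2 (n+1) * transpose_mat (A1 (n+1))) * transpose_mat (A2 n)
        + transpose_mat (A2 n) * (A1 n * transpose_mat (A2 n) + transpose_mat (prevA A1 n) * prevA A2 n))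
      + (2 * a20) \<cdot>\<^sub>m transpose_mat (A1 n)"
    unfolding ip_mat_cmult_right ip_mat_mult3_next[OF three_term_x three_term_x three_term_x]
      ip_mat_mult3_next[OF three_term_y three_term_x three_term_y] ip_mat_mult_next[OF three_term_x] ..
  finally show ?thesis .
qed

theorem matrix_freud_equation_x:
  "(4 * a40) \<cdot>\<^sub>m (A1 n * ((A1 (n+1) * transpose_mat (A1 (n+1))) * transpose_mat (A1 n)
        + transpose_mat (A1 n) * (A1 n * transpose_mat (A1 n)
                                  + transpose_mat (prevA A1 n) * prevA A1 n)))
    + (2 * a22) \<cdot>\<^sub>m (A1 n * ((A2 (n+1) * transpose_mat (A1 (n+1))) * transpose_mat (A2 n)
        + transpose_mat (A2 n) * (A1 n * transpose_mat (A2 n)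
                                  + transpose_mat (prevA A1 n) * prevA A2 n)))
    + (2 * a20) \<cdot>\<^sub>m (A1 n * transpose_mat (A1 n))
    = G n n * N1 (n+1) * minv (G n n)"
  using A1_mult_ip_mat_dq_x_leading[of n] unfolding ip_mat_dq_x_three_term
  using three_term_carrier[OF three_term_x, of n] three_term_carrier[OF three_term_x, of "n + 1"]
    three_term_carrier[OF three_term_y, of n] three_term_carrier[OF three_term_y, of "n + 1"]
    three_term_prevA_carrier[OF three_term_x, of n] three_term_prevA_carrier[OF three_term_y, of n]
  by (simp add: mult_smult_add3[of _ "n + 1" "n + 2" _ "n + 1"])

end

section \<open>Reflection in the diagonal\<close>

text \<open>Reversing \<open>\<bbbX>\<^sub>k = (x\<^sup>k, \<dots>, y\<^sup>k)\<^sup>T\<close> is left multiplication by the reversal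
  matrix, so \<open>swap_coeffs G\<close> are the coefficient matrices of the reflected system
  \<open>(x, y) \<mapsto> P\<^sub>n (y, x)\<close>.\<close>
definition reverse_mat :: "nat \<Rightarrow> real mat" where
  "reverse_mat m = mat m m (\<lambda>(i, j). if i + j + 1 = m then 1 else 0)"

definition swap_coeffs :: "(nat \<Rightarrow> nat \<Rightarrow> real mat) \<Rightarrow> nat \<Rightarrow> nat \<Rightarrow> real mat" where
  "swap_coeffs G n k = G n k * reverse_mat (k + 1)"

lemma reverse_mat_carrier [simp]: "reverse_mat m \<in> carrier_mat m m"
  by (simp add: reverse_mat_def)

lemma mult_reverse_mat_index:
  assumes "A \<in> carrier_mat r m" "i < r" "j < m"
  shows "(A * reverse_mat m) $$ (i, j) = A $$ (i, m - 1 - j)"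
proof -
  have "(A * reverse_mat m) $$ (i, j) = (\<Sum>k<m. A $$ (i, k) * (if k + j + 1 = m then 1 else 0))"
    using assms by (simp add: reverse_mat_def scalar_prod_def atLeast0LessThan)
  also have "\<dots> = (\<Sum>k<m. if k = m - 1 - j then A $$ (i, m - 1 - j) else 0)"
    using assms by (intro sum.cong) auto
  finally show ?thesis using assms by simp
qed

lemma reverse_mat_mult_index:
  assumes "A \<in> carrier_mat m c" "i < m" "j < c"
  shows "(reverse_mat m * A) $$ (i, j) = A $$ (m - 1 - i, j)"
proof -
  have "(reverse_mat m * A) $$ (i, j) = (\<Sum>k<m. (if i + k + 1 = m then 1 else 0) * A $$ (k, j))"
    using assms by (simp add: reverse_mat_def scalar_prod_def atLeast0LessThan)
  also have "\<dots> = (\<Sum>k<m. if k = m - 1 - i then A $$ (m - 1 - i, j) else 0)"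
    using assms by (intro sum.cong) auto
  finally show ?thesis using assms by simp
qed

lemma reverse_mat_mult_reverse_mat: "reverse_mat m * reverse_mat m = 1\<^sub>m m"
proof (rule eq_matI)
  fix i j assume "i < dim_row (1\<^sub>m m)" "j < dim_col (1\<^sub>m m)"
  then show "(reverse_mat m * reverse_mat m) $$ (i, j) = 1\<^sub>m m $$ (i, j)"
    by (subst mult_reverse_mat_index[OF reverse_mat_carrier]) (auto simp: reverse_mat_def)
qed (simp_all add: reverse_mat_def)

lemma reverse_N1_reverse: "reverse_mat m * N1 m * reverse_mat m = N2 m"
proof (rule eq_matI)
  fix i j assume "i < dim_row (N2 m)" "j < dim_col (N2 m)"
  then have "i < m" "j < m" by (simp_all add: N2_def)
  have "reverse_mat m * N1 m \<in> carrier_mat m m"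
    using mult_carrier_mat[OF reverse_mat_carrier, of "N1 m" m] by (simp add: N1_def)
  then have "(reverse_mat m * N1 m * reverse_mat m) $$ (i, j) = (reverse_mat m * N1 m) $$ (i, m - 1 - j)"
    using \<open>i < m\<close> \<open>j < m\<close> by (intro mult_reverse_mat_index)
  also have "\<dots> = N1 m $$ (m - 1 - i, m - 1 - j)"
    using \<open>i < m\<close> \<open>j < m\<close> by (intro reverse_mat_mult_index) (auto simp: N1_def)
  finally show "(reverse_mat m * N1 m * reverse_mat m) $$ (i, j) = N2 m $$ (i, j)"
    using \<open>i < m\<close> \<open>j < m\<close> by (auto simp: N1_def N2_def)
qed (simp_all add: N1_def N2_def reverse_mat_def)

lemma opoly_swap_coeffs:
  assumes "\<And>k. k \<le> n \<Longrightarrow> G n k \<in> carrier_mat (n + 1) (k + 1)" and "i \<le> n"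
  shows "opoly (swap_coeffs G) n i x y = opoly G n i y x"
  unfolding opoly_def
proof (rule sum.cong[OF refl])
  fix k assume "k \<in> {..n}"
  then have "swap_coeffs G n k $$ (i, j) = G n k $$ (i, k - j)" if "j \<le> k" for j
    unfolding swap_coeffs_def using assms that
    by (subst mult_reverse_mat_index[OF assms(1)]) auto
  then have "(\<Sum>j\<le>k. swap_coeffs G n k $$ (i, j) * x ^ (k - j) * y ^ j)
      = (\<Sum>j\<le>k. G n k $$ (i, k - j) * x ^ (k - j) * y ^ (k - (k - j)))"
    by (intro sum.cong) auto
  also have "\<dots> = (\<Sum>j\<le>k. G n k $$ (i, j) * x ^ j * y ^ (k - j))"
    using sum.atLeastAtMost_rev[of "\<lambda>j. G n k $$ (i, j) * x ^ j * y ^ (k - j)" 0 k]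
    by (simp add: atLeast0AtMost)
  finally show "(\<Sum>j\<le>k. swap_coeffs G n k $$ (i, j) * x ^ (k - j) * y ^ j)
      = (\<Sum>j\<le>k. G n k $$ (i, j) * y ^ (k - j) * x ^ j)"
    by (simp add: mult_ac)
qed

lemma ip_swap:
  assumes "(\<lambda>(x, y). f x y * g x y * W x y) \<in> borel_measurable lborel"
  shows "ip (\<lambda>x y. W y x) (\<lambda>x y. f y x) (\<lambda>x y. g y x) = ip W f g"
  using lborel_pair.integral_product_swap[of "\<lambda>(x, y). f x y * g x y * W x y"] assms
  by (simp add: ip_def lborel_prod)

context orthonormal_three_term
begin

lemma opoly_swap_coeffs_eq: "l \<le> k \<Longrightarrow> opoly (swap_coeffs G) k l = (\<lambda>x y. P k l y x)"
  by (intro ext opoly_swap_coeffs G_carrier)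

lemma swap_orthonormal_system: "orthonormal_system (\<lambda>x y. W y x) (swap_coeffs G)"
  unfolding orthonormal_system_def
proof (intro conjI allI impI)
  fix n k :: nat assume "k \<le> n"
  then show "swap_coeffs G n k \<in> carrier_mat (n + 1) (k + 1)"
    unfolding swap_coeffs_def by (intro mult_carrier_mat[OF G_carrier reverse_mat_carrier])
next
  fix n i :: nat assume "i \<le> n"
  then obtain j where j: "j \<le> n" "G n n $$ (i, j) \<noteq> 0"
    using orthonormal unfolding orthonormal_system_def by blast
  have "swap_coeffs G n n $$ (i, n - j) = G n n $$ (i, j)"
    unfolding swap_coeffs_def using \<open>i \<le> n\<close> j(1)
    by (subst mult_reverse_mat_index[OF G_carrier[of n n]]) auto
  then show "\<exists>j\<le>n. swap_coeffs G n n $$ (i, j) \<noteq> 0"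
    using j by (intro exI[of _ "n - j"]) auto
next
  fix n m i j :: nat assume "i \<le> n" "j \<le> m"
  have "ip (\<lambda>x y. W y x) (\<lambda>x y. P n i y x) (\<lambda>x y. P m j y x) = ip W (P n i) (P m j)"
    using borel_measurable_times[OF borel_measurable_times[OF opoly_measurable opoly_measurable]
        W_measurable]
    by (intro ip_swap) (simp add: case_prod_beta')
  then show "ip (\<lambda>x y. W y x) (opoly (swap_coeffs G) n i) (opoly (swap_coeffs G) m j)
      = (if n = m \<and> i = j then 1 else 0)"
    unfolding opoly_swap_coeffs_eq[OF \<open>i \<le> n\<close>] opoly_swap_coeffs_eq[OF \<open>j \<le> m\<close>]
    using \<open>i \<le> n\<close> \<open>j \<le> m\<close> by (simp add: ip_P_P)
qed

lemma three_term_swap: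
  assumes "three_term G z A"
  shows "three_term (swap_coeffs G) (\<lambda>x y. z y x) A"
  unfolding three_term_def
proof (intro conjI allI impI)
  show "A n \<in> carrier_mat (n + 1) (n + 2)" for n :: nat
    using three_term_carrier[OF assms] .
  fix n i :: nat and x y :: real assume "i \<le> n"
  then show "z y x * opoly (swap_coeffs G) n i x y =
      (\<Sum>j\<le>n + 1. A n $$ (i, j) * opoly (swap_coeffs G) (n + 1) j x y) +
      (\<Sum>j<n. prevA A n $$ (j, i) * opoly (swap_coeffs G) (n - 1) j x y)"
  proof -
    have swap: "opoly (swap_coeffs G) m j x y = P m j y x" if "j \<le> m" for m j
      using opoly_swap_coeffs_eq[OF that] by simp
    have "(\<Sum>j\<le>n + 1. A n $$ (i, j) * opoly (swap_coeffs G) (n + 1) j x y)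
        = (\<Sum>j\<le>n + 1. A n $$ (i, j) * P (n + 1) j y x)"
      by (intro sum.cong refl) (simp add: swap)
    moreover have "(\<Sum>j<n. prevA A n $$ (j, i) * opoly (swap_coeffs G) (n - 1) j x y)
        = (\<Sum>j<n. prevA A n $$ (j, i) * P (n - 1) j y x)"
      by (intro sum.cong refl) (simp add: swap)
    ultimately show ?thesis
      unfolding swap[OF \<open>i \<le> n\<close>] by (simp only: three_term_eq[OF assms \<open>i \<le> n\<close>])
  qed
qed

lemma swap_orthonormal_three_term: "orthonormal_three_term (\<lambda>x y. W y x) (swap_coeffs G) A2 A1"
proof
  show "orthonormal_system (\<lambda>x y. W y x) (swap_coeffs G)" by (rule swap_orthonormal_system)
  show "three_term (swap_coeffs G) (\<lambda>x y. x) A2" using three_term_swap[OF three_term_y] by simp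
  show "three_term (swap_coeffs G) (\<lambda>x y. y) A1" using three_term_swap[OF three_term_x] by simp
  show "0 \<le> W y x" for x y by (rule W_nonneg)
  have "(\<lambda>z. (\<lambda>(x, y). W x y) (case z of (x, y) \<Rightarrow> (y, x))) \<in> borel_measurable (lborel \<Otimes>\<^sub>M lborel)"
    using W_measurable by (intro measurable_compose[OF measurable_pair_swap']) (simp add: lborel_prod)
  then show "(\<lambda>(x, y). W y x) \<in> borel_measurable lborel"
    by (simp add: lborel_prod case_prod_beta')
qed

lemma swap_coeffs_conj_N1:
  "swap_coeffs G n n * N1 (n + 1) * minv (swap_coeffs G n n) = G n n * N2 (n + 1) * minv (G n n)"
proof -
  define J where "J = reverse_mat (n + 1)"
  define M where "M = minv (G n n)"
  have carrier: "G n n \<in> carrier_mat (n + 1) (n + 1)" "J \<in> carrier_mat (n + 1) (n + 1)"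
      "M \<in> carrier_mat (n + 1) (n + 1)" "N1 (n + 1) \<in> carrier_mat (n + 1) (n + 1)"
    using G_carrier[of n n] by (simp_all add: J_def M_def minv_leading N1_def)
  note assoc = assoc_mult_mat[of _ "n + 1" "n + 1" _ "n + 1" _ "n + 1"]
  have "G n n * J * (J * M) = G n n * (J * J) * M"
    using carrier by (simp add: assoc)
  also have "\<dots> = 1\<^sub>m (n + 1)"
    using carrier leading_mult_minv[of n] by (simp add: J_def M_def reverse_mat_mult_reverse_mat)
  finally have "minv (G n n * J) = J * M"
    using carrier by (intro minv_eqI) auto
  then have "swap_coeffs G n n * N1 (n + 1) * minv (swap_coeffs G n n) = G n n * J * N1 (n + 1) * (J * M)"
    by (simp add: swap_coeffs_def J_def)
  also have "\<dots> = G n n * (J * N1 (n + 1) * J) * M"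
    using carrier by (simp add: assoc)
  finally show ?thesis by (simp add: J_def M_def reverse_N1_reverse)
qed

end

lemma (in quartic_three_term) swap_quartic_three_term:
  "quartic_three_term (\<lambda>x y. W y x) (swap_coeffs G) A2 A1 a04 a22 a40 a02 a20"
  unfolding quartic_three_term_def quartic_three_term_axioms_def
proof (intro conjI swap_orthonormal_three_term)
  show "(\<lambda>x y. W y x) = weight a04 a22 a40 a02 a20"
    by (auto simp: fun_eq_iff weight_eq weight_def qform_def algebra_simps)
qed

theorem theorem5p1:
  fixes a40 a22 a04 a20 a02 :: real
    and G :: "nat \<Rightarrow> nat \<Rightarrow> real mat"
    and A1 A2 :: "nat \<Rightarrow> real mat"
    and n :: nat
  assumes "a40 \<ge> 0" and "a22 \<ge> 0" and "a04 \<ge> 0"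
    and "a40 + a22 > 0" and "a22 + a04 > 0"
    and "orthonormal_system (weight a40 a22 a04 a20 a02) G"
    and "three_term G (\<lambda>x y. x) A1"
    and "three_term G (\<lambda>x y. y) A2"
  shows
   "((4 * a40) \<cdot>\<^sub>m (A1 n * ((A1 (n+1) * transpose_mat (A1 (n+1))) * transpose_mat (A1 n)
        + transpose_mat (A1 n) * (A1 n * transpose_mat (A1 n)
                                  + transpose_mat (prevA A1 n) * prevA A1 n)))
    + (2 * a22) \<cdot>\<^sub>m (A1 n * ((A2 (n+1) * transpose_mat (A1 (n+1))) * transpose_mat (A2 n)
        + transpose_mat (A2 n) * (A1 n * transpose_mat (A2 n)
                                  + transpose_mat (prevA A1 n) * prevA A2 n)))
    + (2 * a20) \<cdot>\<^sub>m (A1 n * transpose_mat (A1 n))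
    = G n n * N1 (n+1) * minv (G n n))
    \<and>
    ((4 * a04) \<cdot>\<^sub>m (A2 n * ((A2 (n+1) * transpose_mat (A2 (n+1))) * transpose_mat (A2 n)
        + transpose_mat (A2 n) * (A2 n * transpose_mat (A2 n)
                                  + transpose_mat (prevA A2 n) * prevA A2 n)))
    + (2 * a22) \<cdot>\<^sub>m (A2 n * ((A1 (n+1) * transpose_mat (A2 (n+1))) * transpose_mat (A1 n)
        + transpose_mat (A1 n) * (A2 n * transpose_mat (A1 n)
                                  + transpose_mat (prevA A2 n) * prevA A1 n)))
    + (2 * a02) \<cdot>\<^sub>m (A2 n * transpose_mat (A2 n))
    = G n n * N2 (n+1) * minv (G n n))"
proof -
  \<comment> \<open>The sign conditions only make \<open>W\<close> integrable, so that an orthonormal system exists.\<close>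
  interpret quartic_three_term "weight a40 a22 a04 a20 a02" G A1 A2 a40 a22 a04 a20 a02
    by unfold_locales (use assms(6-8) weight_nonneg weight_measurable in auto)
  interpret reflected: quartic_three_term "\<lambda>x y. weight a40 a22 a04 a20 a02 y x" "swap_coeffs G" A2 A1
      a04 a22 a40 a02 a20
    by (rule swap_quartic_three_term)
  show ?thesis
    using matrix_freud_equation_x[of n] reflected.matrix_freud_equation_x[of n]
    unfolding swap_coeffs_conj_N1 by (intro conjI)
qed

end
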